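(* Let $n\geq 1$ and let $f:GL_n(R)\rightarrow \mathfrak{gl}_n(R)$ be a $\delta$-map which is a cocycle for the adjoint action, i.e. for all $g_1,g_2\in GL_n(R)$, $$f(g_1g_2)=f(g_1)+g_1f(g_2)g_1^{-1}.$$ Then there exist a $\delta$-homomorphism $\omega:\mathbb{G}_m\rightarrow\mathbb{G}_a$ (i.e. a group homomorphism $\omega:R^{\times}\rightarrow R$ which is a $\delta$-map) and a matrix $v\in\mathfrak{gl}_n(R)$ such that for all $g\in GL_n(R)$, $$f(g)=\omega(\det(g))\,1_n+gvg^{-1}-v.$$
   Context: $\delta$-arithmetic setting: $p$ is an odd prime and $R$ is the unique complete discrete valuation ring with maximal ideal $pR$ and residue field $R/pR$ equal to the algebraic closure $\mathbb{F}_p^a$ of $\mathbb{F}_p$ (i.e. the Witt vectors of $\mathbb{F}_p^a$). Let $\phi:R\rightarrow R$ be the unique ring homomorphism lifting the $p$-power Frobenius of the residue field, and let $\delta:R\rightarrow R$ be $\delta x=(\phi(x)-x^p)/p$. For a tuple of variables $x$, write $\hat{\ }$ for $p$-adic completion. A map $f:R^N\rightarrow R^M$ is a $\delta$-map (of order $m$) if there is an $M$-tuple $F$ of restricted power series in $R[x_0,\dots,x_m]\hat{\ }$ ($x_i$ being $N$-tuples of variables) with $f(a)=F(a,\delta a,\dots,\delta^m a)$ for all $a\in R^N$ ($\delta$ applied componentwise). For $GL_n$, $\mathbb{G}_m$, etc., a $\delta$-map is a map of $R$-points of this form where the power series may also involve the inverse of the determinant (for $GL_n$) or $x^{-1}$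 (for $\mathbb{G}_m$), i.e. $F$ has entries in $R[x,\det(x)^{-1},x',\dots,x^{(m)}]\hat{\ }$ with $f(g)=F(g,\delta g,\dots,\delta^m g)$. $\mathfrak{gl}_n(R)$ denotes all $n\times n$ matrices over $R$ and $1_n$ the identity matrix. *)

theory Defs
  imports "HOL-Analysis.Analysis" "HOL-Computational_Algebra.Polynomial"
begin

text \<open>Abstract characterisation of the delta-arithmetic setting: R is a complete DVR
with maximal ideal pR (p odd prime), residue field algebraically closed and algebraic
over F_p (hence equal to the algebraic closure of F_p), and phi is a ring endomorphism
lifting Frobenius.\<close>

definition runit :: "'r::idom \<Rightarrow> bool" where
  "runit u \<longleftrightarrow> (\<exists>v. u * v = 1)"

definition delta_setting :: "nat \<Rightarrow> ('r::idom \<Rightarrow> 'r) \<Rightarrow> bool" where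
  "delta_setting p \<phi> \<longleftrightarrow>
     prime p \<and> odd p \<and> (of_nat p :: 'r) \<noteq> 0 \<and> \<not> runit (of_nat p :: 'r) \<and>
     (\<forall>x::'r. x \<noteq> 0 \<longrightarrow> (\<exists>u k. runit u \<and> x = u * of_nat p ^ k)) \<and>
     (\<forall>X::nat \<Rightarrow> 'r. (\<forall>k. \<exists>N. \<forall>m\<ge>N. (of_nat p ^ k) dvd (X m - X N)) \<longrightarrow>
         (\<exists>L. \<forall>k. \<exists>N. \<forall>m\<ge>N. (of_nat p ^ k) dvd (X m - L))) \<and>
     (\<forall>P::'r poly. degree P \<ge> 1 \<and> \<not> (of_nat p) dvd lead_coeff P \<longrightarrow>
         (\<exists>a. (of_nat p) dvd poly P a)) \<and>
     (\<forall>a::'r. \<exists>k\<ge>1. (of_nat p) dvd (a ^ (p ^ k) - a)) \<and>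
     \<phi> 1 = 1 \<and> (\<forall>x y. \<phi> (x + y) = \<phi> x + \<phi> y) \<and> (\<forall>x y. \<phi> (x * y) = \<phi> x * \<phi> y) \<and>
     (\<forall>x. (of_nat p) dvd (\<phi> x - x ^ p))"

definition delta :: "nat \<Rightarrow> ('r::idom \<Rightarrow> 'r) \<Rightarrow> 'r \<Rightarrow> 'r" where
  "delta p \<phi> x = (THE y. of_nat p * y = \<phi> x - x ^ p)"

definition ring_inv :: "'r::idom \<Rightarrow> 'r" where
  "ring_inv u = (THE v. u * v = 1)"

text \<open>Restricted power series with coefficients in R in the variables of V:
coefficient functions on monomials (exponent vectors of finite support in V)
whose coefficients tend to 0 p-adically.\<close>

definition rps :: "nat \<Rightarrow> 'v set \<Rightarrow> (('v \<Rightarrow> nat) \<Rightarrow> 'r::idom) \<Rightarrow> bool" where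
  "rps p V c \<longleftrightarrow>
     (\<forall>\<alpha>. c \<alpha> \<noteq> 0 \<longrightarrow> finite {v. \<alpha> v \<noteq> 0} \<and> {v. \<alpha> v \<noteq> 0} \<subseteq> V) \<and>
     (\<forall>k. finite {\<alpha>. \<not> (of_nat p ^ k :: 'r) dvd c \<alpha>})"

definition mon_eval :: "('v \<Rightarrow> nat) \<Rightarrow> ('v \<Rightarrow> 'r::idom) \<Rightarrow> 'r" where
  "mon_eval \<alpha> a = (\<Prod>v\<in>{v. \<alpha> v \<noteq> 0}. a v ^ \<alpha> v)"

text \<open>y is the (p-adically convergent) value of the series c at the point a:
modulo p^k, y agrees with the polynomial truncation of c mod p^k evaluated at a.\<close>

definition rps_val :: "nat \<Rightarrow> (('v \<Rightarrow> nat) \<Rightarrow> 'r::idom) \<Rightarrow> ('v \<Rightarrow> 'r) \<Rightarrow> 'r \<Rightarrow> bool" where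
  "rps_val p c a y \<longleftrightarrow>
     (\<forall>k. (of_nat p ^ k) dvd
        (y - (\<Sum>\<alpha>\<in>{\<alpha>. \<not> (of_nat p ^ k :: 'r) dvd c \<alpha>}. c \<alpha> * mon_eval \<alpha> a)))"

definition GL_set :: "('r::idom ^'n^'n) set" where
  "GL_set = {g. runit (det g)}"

definition mat_inv :: "'r::idom ^'n^'n \<Rightarrow> 'r ^'n^'n" where
  "mat_inv g = (THE h. g ** h = mat 1 \<and> h ** g = mat 1)"

text \<open>Point (g, det(g)^{-1}, delta g, ..., delta^l g, ...): variable None is det^{-1},
variable Some (l,i,j) is the (i,j) entry of delta^l g.\<close>

definition GL_point :: "nat \<Rightarrow> ('r::idom \<Rightarrow> 'r) \<Rightarrow> 'r^'n^'n \<Rightarrow> (nat \<times> 'n \<times> 'n) option \<Rightarrow> 'r" where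
  "GL_point p \<phi> g v = (case v of None \<Rightarrow> ring_inv (det g)
                        | Some (l, i, j) \<Rightarrow> (delta p \<phi> ^^ l) (g $ i $ j))"

definition delta_map_GL :: "nat \<Rightarrow> ('r::idom \<Rightarrow> 'r) \<Rightarrow> ('r^'n^'n \<Rightarrow> 'r^'n^'n) \<Rightarrow> bool" where
  "delta_map_GL p \<phi> f \<longleftrightarrow>
     (\<exists>(m::nat) (F :: 'n \<Rightarrow> 'n \<Rightarrow> (((nat \<times> 'n \<times> 'n) option \<Rightarrow> nat) \<Rightarrow> 'r)).
        (\<forall>i j. rps p {v. case v of None \<Rightarrow> True | Some (l, _, _) \<Rightarrow> l \<le> m} (F i j)) \<and>
        (\<forall>g\<in>GL_set. \<forall>i j. rps_val p (F i j) (GL_point p \<phi> g) (f g $ i $ j)))"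

definition Gm_point :: "nat \<Rightarrow> ('r::idom \<Rightarrow> 'r) \<Rightarrow> 'r \<Rightarrow> nat option \<Rightarrow> 'r" where
  "Gm_point p \<phi> u v = (case v of None \<Rightarrow> ring_inv u | Some l \<Rightarrow> (delta p \<phi> ^^ l) u)"

definition delta_map_Gm :: "nat \<Rightarrow> ('r::idom \<Rightarrow> 'r) \<Rightarrow> ('r \<Rightarrow> 'r) \<Rightarrow> bool" where
  "delta_map_Gm p \<phi> w \<longleftrightarrow>
     (\<exists>(m::nat) (G :: (nat option \<Rightarrow> nat) \<Rightarrow> 'r).
        rps p {v. case v of None \<Rightarrow> True | Some l \<Rightarrow> l \<le> m} G \<and>
        (\<forall>u. runit u \<longrightarrow> rps_val p G (Gm_point p \<phi> u) (w u)))"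

definition delta_hom_Gm_Ga :: "nat \<Rightarrow> ('r::idom \<Rightarrow> 'r) \<Rightarrow> ('r \<Rightarrow> 'r) \<Rightarrow> bool" where
  "delta_hom_Gm_Ga p \<phi> w \<longleftrightarrow>
     (\<forall>u v. runit u \<longrightarrow> runit v \<longrightarrow> w (u * v) = w u + w v) \<and> delta_map_Gm p \<phi> w"

end

theory Submission
  imports Defs
begin

text \<open>Subtracting coboundaries normalises the cocycle \<open>f\<close>. Since the reflections
  \<open>diag(1, \<dots>, -1, \<dots>, 1)\<close> commute with all diagonal matrices, \<open>f\<close> becomes diagonal on diagonal
  matrices. Conjugating transvections by diagonal matrices then shows \<open>f(e\<^sub>i\<^sub>j(a)) = a c\<^sub>i\<^sub>j E\<^sub>i\<^sub>j\<close>: the map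
  \<open>a \<mapsto> f(e\<^sub>i\<^sub>j(a))\<^sub>i\<^sub>j - a c\<^sub>i\<^sub>j\<close> is a derivation of \<open>R\<close>, and \<open>R\<close> has no non-zero derivations because every
  element is congruent mod \<open>p\<close> to a \<open>p\<^sup>m\<close>-th power for all \<open>m\<close>. The commutation relations of transvections
  force \<open>c\<^sub>i\<^sub>j = w\<^sub>j - w\<^sub>i\<close>, a further coboundary; after removing it, \<open>f\<close> vanishes on transvections and
  equals \<open>\<omega>(det g) 1\<^sub>n\<close> on diagonal matrices, hence everywhere, because over the local ring \<open>R\<close> these
  matrices generate \<open>GL\<^sub>n(R)\<close>. Finally \<open>\<omega>(u)\<close>, the \<open>(i, i)\<close> entry of \<open>f\<close> at the dilation with \<open>u\<close> in position
  \<open>i\<close>, is a \<open>\<delta>\<close>-map, since a restricted power series stays restricted when some of its variables are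
  frozen to constants.\<close>

section \<open>Units and invertible matrices over a domain\<close>

lemma runit_mult: "runit (a::'r::idom) \<Longrightarrow> runit b \<Longrightarrow> runit (a * b)"
  unfolding runit_def by (metis mult.assoc mult.left_commute mult_1_right)

lemma runit_one [simp]: "runit (1::'r::idom)"
  unfolding runit_def by auto

lemma runit_neg_one [simp]: "runit (-1::'r::idom)"
  unfolding runit_def by (intro exI[of _ "-1"]) simp

lemma runit_prod:
  "finite S \<Longrightarrow> (\<And>l. l \<in> S \<Longrightarrow> runit (x l)) \<Longrightarrow> runit (\<Prod>l\<in>S. x l :: 'r::idom)"
  by (induction S rule: finite_induct) (simp_all add: runit_mult)

lemma ring_inv_unique: "(u::'r::idom) * v = 1 \<Longrightarrow> ring_inv u = v"
  unfolding ring_inv_def by (rule the_equality) (metis mult.assoc mult.commute mult_1_right)+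

lemma runit_right_inverse: "runit (u::'r::idom) \<Longrightarrow> u * ring_inv u = 1"
  unfolding runit_def using ring_inv_unique by blast

lemma runit_left_inverse: "runit (u::'r::idom) \<Longrightarrow> ring_inv u * u = 1"
  using runit_right_inverse by (metis mult.commute)

lemma runit_ring_inv: "runit (u::'r::idom) \<Longrightarrow> runit (ring_inv u)"
  using runit_left_inverse unfolding runit_def by blast

lemma ring_inv_one [simp]: "ring_inv (1::'r::idom) = 1"
  by (rule ring_inv_unique) simp

definition adjugate :: "'r::comm_ring_1^'n^'n \<Rightarrow> 'r^'n^'n" where
  "adjugate A = (\<chi> i j. det (\<chi> k. if k = j then axis i 1 else A $ k))"

lemma matrix_mul_adjugate: "(A::'r::comm_ring_1^'n^'n) ** adjugate A = mat (det A)"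
proof -
  have "(A ** adjugate A) $ x $ y = (if x = y then det A else 0)" for x y
  proof -
    have "(A ** adjugate A) $ x $ y
        = (\<Sum>i\<in>UNIV. det (\<chi> k. if k = y then A $ x $ i *s axis i 1 else A $ k))"
      by (simp add: matrix_matrix_mult_def adjugate_def det_row_mul)
    also have "\<dots> = det (\<chi> k. if k = y then (\<Sum>i\<in>UNIV. A $ x $ i *s axis i 1) else A $ k)"
      by (rule det_linear_row_sum[symmetric]) simp
    also have "\<dots> = det (\<chi> k. if k = y then A $ x else A $ k)"
      unfolding basis_expansion ..
    also have "\<dots> = (if x = y then det A else 0)"
    proof (cases "x = y")
      case False
      then have "row x (\<chi> k. if k = y then A $ x else A $ k) = row y (\<chi> k. if k = y then A $ x else A $ k)"
        by (simp add: row_def vec_eq_iff)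
      with False show ?thesis by (metis (no_types, lifting) det_identical_rows)
    next
      case True
      then have "(\<chi> k. if k = y then A $ x else A $ k) = A" by (simp add: vec_eq_iff)
      with True show ?thesis by simp
    qed
    finally show ?thesis .
  qed
  then show ?thesis by (simp add: vec_eq_iff mat_def)
qed

definition diag_mat :: "('n::finite \<Rightarrow> 'r::comm_ring_1) \<Rightarrow> 'r^'n^'n" where
  "diag_mat x = (\<chi> a b. if a = b then x a else 0)"

lemma diag_mat_mult_left: "(diag_mat x ** B) $ a $ b = x a * B $ a $ b"
proof -
  have "(diag_mat x ** B) $ a $ b = (\<Sum>k\<in>UNIV. (if a = k then x a else 0) * B $ k $ b)"
    by (simp add: matrix_matrix_mult_def diag_mat_def)
  also have "\<dots> = (\<Sum>k\<in>UNIV. if k = a then x a * B $ a $ b else 0)"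
    by (rule sum.cong) auto
  finally show ?thesis by simp
qed

lemma diag_mat_mult_right: "(B ** diag_mat x) $ a $ b = B $ a $ b * x b"
proof -
  have "(B ** diag_mat x) $ a $ b = (\<Sum>k\<in>UNIV. B $ a $ k * (if k = b then x k else 0))"
    by (simp add: matrix_matrix_mult_def diag_mat_def)
  also have "\<dots> = (\<Sum>k\<in>UNIV. if k = b then B $ a $ b * x b else 0)"
    by (rule sum.cong) auto
  finally show ?thesis by simp
qed

lemma mat_eq_diag_mat: "mat c = diag_mat (\<lambda>_. c)"
  by (simp add: mat_def diag_mat_def)

lemma diag_mat_mult: "diag_mat x ** diag_mat y = diag_mat (\<lambda>a. x a * y a)"
  by (simp add: vec_eq_iff diag_mat_mult_left) (simp add: diag_mat_def)

lemma mat_mult_mat: "(mat a :: 'r::comm_ring_1^'n::finite^'n) ** mat b = mat (a * b)"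
  unfolding mat_eq_diag_mat diag_mat_mult ..

lemma matrix_mul_mat_commute: "(A::'r::comm_ring_1^'n::finite^'n) ** mat c = mat c ** A"
  unfolding mat_eq_diag_mat by (simp add: vec_eq_iff diag_mat_mult_left diag_mat_mult_right mult.commute)

lemma mat_add: "mat (a + b) = (mat a + mat b :: 'r::comm_ring_1^'n^'n)"
  by (simp add: vec_eq_iff mat_def)

lemma matrix_add_rdistrib: "(B + C) ** (A::'r::comm_ring_1^'n^'n) = B ** A + C ** A"
  by (simp add: vec_eq_iff matrix_matrix_mult_def distrib_right sum.distrib)

lemma matrix_diff_ldistrib: "(A::'r::comm_ring_1^'n^'n) ** (B - C) = A ** B - A ** C"
  by (simp add: vec_eq_iff matrix_matrix_mult_def right_diff_distrib sum_subtractf)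

lemma matrix_diff_rdistrib: "(B - C) ** (A::'r::comm_ring_1^'n^'n) = B ** A - C ** A"
  by (simp add: vec_eq_iff matrix_matrix_mult_def left_diff_distrib sum_subtractf)

lemma right_inverse_if_det_unit:
  assumes "runit (det (A::'r::idom^'n^'n))"
  shows "\<exists>B. A ** B = mat 1"
proof
  show "A ** (adjugate A ** mat (ring_inv (det A))) = mat 1"
    using runit_right_inverse[OF assms]
    by (simp add: matrix_mul_assoc matrix_mul_adjugate mat_mult_mat)
qed

lemma GL_setI: "(A::'r::idom^'n^'n) ** B = mat 1 \<Longrightarrow> A \<in> GL_set"
proof -
  assume "A ** B = mat 1"
  then have "det A * det B = 1" by (metis det_I det_mul)
  then show ?thesis unfolding GL_set_def runit_def by blast
qed

lemma GL_set_iff_right_inverse: "(A::'r::idom^'n^'n) \<in> GL_set \<longleftrightarrow> (\<exists>B. A ** B = mat 1)"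
  using GL_setI right_inverse_if_det_unit unfolding GL_set_def by auto

lemma GL_set_inverse:
  assumes "(A::'r::idom^'n^'n) \<in> GL_set"
  shows "\<exists>B. A ** B = mat 1 \<and> B ** A = mat 1"
proof -
  obtain B where B: "A ** B = mat 1" using assms GL_set_iff_right_inverse by blast
  then have "det B * det A = 1"
    by (metis det_I det_mul mult.commute)
  then have "B \<in> GL_set"
    unfolding GL_set_def runit_def by blast
  then obtain C where C: "B ** C = mat 1" using GL_set_iff_right_inverse by blast
  have "A = A ** (B ** C)" using C by simp
  also have "\<dots> = C" using B by (simp add: matrix_mul_assoc)
  finally have "B ** A = mat 1" using C by simp
  with B show ?thesis by blast
qed

lemma mat_inv_unique:
  assumes "(A::'r::idom^'n^'n) ** B = mat 1" "B ** A = mat 1"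
  shows "mat_inv A = B"
  unfolding mat_inv_def
proof (rule the_equality)
  fix C assume "A ** C = mat 1 \<and> C ** A = mat 1"
  then have "C = C ** (A ** B)" using assms by simp
  also have "\<dots> = B" using \<open>A ** C = mat 1 \<and> C ** A = mat 1\<close> by (simp add: matrix_mul_assoc)
  finally show "C = B" .
qed (use assms in blast)

lemma GL_mat_inv:
  assumes "A \<in> (GL_set :: ('r::idom^'n^'n) set)"
  shows "A ** mat_inv A = mat 1" "mat_inv A ** A = mat 1"
  using GL_set_inverse[OF assms] mat_inv_unique by blast+

lemma GL_one: "mat 1 \<in> (GL_set :: ('r::idom^'n^'n) set)"
  by (rule GL_setI[of _ "mat 1"]) simp

lemma GL_mult: "A \<in> GL_set \<Longrightarrow> B \<in> GL_set \<Longrightarrow> A ** B \<in> (GL_set :: ('r::idom^'n^'n) set)"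
  unfolding GL_set_def by (simp add: det_mul runit_mult)

lemma GL_mat_inv_mem: "A \<in> GL_set \<Longrightarrow> mat_inv A \<in> (GL_set :: ('r::idom^'n^'n) set)"
  using GL_mat_inv(2) GL_setI by blast

lemma GL_det_unit: "A \<in> (GL_set :: ('r::idom^'n^'n) set) \<Longrightarrow> runit (det A)"
  unfolding GL_set_def by simp

lemma mat_inv_mult:
  assumes "A \<in> GL_set" "B \<in> GL_set"
  shows "mat_inv (A ** B) = mat_inv B ** mat_inv (A::'r::idom^'n^'n)"
proof (rule mat_inv_unique)
  have "A ** B ** (mat_inv B ** mat_inv A) = A ** (B ** mat_inv B) ** mat_inv A"
    "mat_inv B ** mat_inv A ** (A ** B) = mat_inv B ** (mat_inv A ** A) ** B"
    by (simp_all add: matrix_mul_assoc)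
  then show "A ** B ** (mat_inv B ** mat_inv A) = mat 1" "mat_inv B ** mat_inv A ** (A ** B) = mat 1"
    using GL_mat_inv[OF assms(1)] GL_mat_inv[OF assms(2)] by simp_all
qed

lemma mat_inv_one [simp]: "mat_inv (mat 1 :: 'r::idom^'n^'n) = mat 1"
  by (rule mat_inv_unique) simp_all

section \<open>The adjoint action and its cocycles\<close>

definition Ad :: "'r::idom^'n^'n \<Rightarrow> 'r^'n^'n \<Rightarrow> 'r^'n^'n" where
  "Ad g X = g ** X ** mat_inv g"

definition coboundary :: "'r::idom^'n^'n \<Rightarrow> 'r^'n^'n \<Rightarrow> 'r^'n^'n" where
  "coboundary v g = Ad g v - v"

definition cocycle :: "('r::idom^'n^'n \<Rightarrow> 'r^'n^'n) \<Rightarrow> bool" where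
  "cocycle f \<longleftrightarrow> (\<forall>g1\<in>GL_set. \<forall>g2\<in>GL_set. f (g1 ** g2) = f g1 + Ad g1 (f g2))"

lemma cocycleD: "cocycle f \<Longrightarrow> g1 \<in> GL_set \<Longrightarrow> g2 \<in> GL_set \<Longrightarrow> f (g1 ** g2) = f g1 + Ad g1 (f g2)"
  unfolding cocycle_def by blast

lemma Ad_add: "Ad g (X + Y) = Ad g X + Ad g Y"
  by (simp add: Ad_def matrix_add_ldistrib matrix_add_rdistrib)

lemma Ad_diff: "Ad g (X - Y) = Ad g X - Ad g Y"
  by (simp add: Ad_def matrix_diff_ldistrib matrix_diff_rdistrib)

lemma Ad_minus: "Ad g (- X) = - Ad g X"
  using Ad_diff[of g 0 X] by (simp add: Ad_def)

lemma Ad_mat: "g \<in> GL_set \<Longrightarrow> Ad g (mat c) = mat c"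
  unfolding Ad_def matrix_mul_mat_commute by (simp add: matrix_mul_assoc[symmetric] GL_mat_inv)

lemma Ad_mult: "g \<in> GL_set \<Longrightarrow> h \<in> GL_set \<Longrightarrow> Ad (g ** h) X = Ad g (Ad h X)"
  unfolding Ad_def by (simp add: mat_inv_mult matrix_mul_assoc)

lemma Ad_one [simp]: "Ad (mat 1) X = X"
  by (simp add: Ad_def)

lemma cocycle_one: "cocycle f \<Longrightarrow> f (mat 1) = 0"
  using cocycleD[of f "mat 1" "mat 1"] GL_one by simp

lemma cocycle_mat_inv:
  assumes "cocycle f" "g \<in> GL_set"
  shows "f (mat_inv g) = - Ad (mat_inv g) (f g)"
proof -
  have "0 = f (mat_inv g ** g)" using cocycle_one[OF assms(1)] GL_mat_inv[OF assms(2)] by simp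
  also have "\<dots> = f (mat_inv g) + Ad (mat_inv g) (f g)"
    using cocycleD[OF assms(1) GL_mat_inv_mem assms(2)] assms(2) by simp
  finally show ?thesis by (simp add: eq_neg_iff_add_eq_0)
qed

lemma cocycle_commute:
  assumes "cocycle f" "g \<in> GL_set" "h \<in> GL_set" "g ** h = h ** g"
  shows "f g + Ad g (f h) = f h + Ad h (f g)"
  using cocycleD[OF assms(1,2,3)] cocycleD[OF assms(1,3,2)] assms(4) by simp

lemma cocycle_conj:
  assumes "cocycle f" "g \<in> GL_set" "h \<in> GL_set"
  shows "f (h ** g ** mat_inv h) = f h + Ad h (f g) - Ad (h ** g ** mat_inv h) (f h)"
proof -
  have hg: "h ** g \<in> GL_set" using assms GL_mult by blast
  have "f (h ** g ** mat_inv h) = f (h ** g) + Ad (h ** g) (f (mat_inv h))"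
    using cocycleD[OF assms(1) hg GL_mat_inv_mem[OF assms(3)]] .
  also have "f (h ** g) = f h + Ad h (f g)" using cocycleD[OF assms(1,3,2)] .
  also have "Ad (h ** g) (f (mat_inv h)) = - Ad (h ** g ** mat_inv h) (f h)"
    using cocycle_mat_inv[OF assms(1,3)] Ad_mult[OF hg GL_mat_inv_mem[OF assms(3)]] by (simp add: Ad_minus)
  finally show ?thesis by simp
qed

lemma cocycle_diff_coboundary:
  fixes f :: "'r::idom^'n^'n \<Rightarrow> 'r^'n^'n"
  assumes "cocycle f"
  shows "cocycle (\<lambda>g. f g - coboundary v g)"
  unfolding cocycle_def
proof (intro ballI)
  fix g1 g2 :: "'r^'n^'n" assume g: "g1 \<in> GL_set" "g2 \<in> GL_set"
  have "coboundary v (g1 ** g2) = coboundary v g1 + Ad g1 (coboundary v g2)"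
    unfolding coboundary_def using g by (simp add: Ad_mult Ad_diff)
  then show "f (g1 ** g2) - coboundary v (g1 ** g2) = f g1 - coboundary v g1 + Ad g1 (f g2 - coboundary v g2)"
    using cocycleD[OF assms g] by (simp add: Ad_diff)
qed

lemma coboundary_add: "coboundary (v + w) g = coboundary v g + coboundary w g"
  unfolding coboundary_def by (simp add: Ad_add)

section \<open>Diagonal matrices, transvections and transpositions\<close>

definition transvection :: "'n::finite \<Rightarrow> 'n \<Rightarrow> 'r::comm_ring_1 \<Rightarrow> 'r^'n^'n" where
  "transvection i j c = (\<chi> a b. (if a = b then 1 else 0) + (if a = i \<and> b = j then c else 0))"

definition swap_mat :: "'n::finite \<Rightarrow> 'n \<Rightarrow> 'r::comm_ring_1^'n^'n" where
  "swap_mat i j = (\<chi> a b. if b = Transposition.transpose i j a then 1 else 0)"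

definition dilation :: "'n::finite \<Rightarrow> 'r::comm_ring_1 \<Rightarrow> 'r^'n^'n" where
  "dilation i u = diag_mat (\<lambda>l. if l = i then u else 1)"

lemma transvection_mult_left:
  "(transvection i j c ** B) $ a $ b = B $ a $ b + (if a = i then c * B $ j $ b else 0)"
proof -
  have "(transvection i j c ** B) $ a $ b
      = (\<Sum>k\<in>UNIV. ((if a = k then 1 else 0) + (if a = i \<and> k = j then c else 0)) * B $ k $ b)"
    by (simp add: matrix_matrix_mult_def transvection_def)
  also have "\<dots> = (\<Sum>k\<in>UNIV. (if k = a then B $ a $ b else 0) + (if k = j then (if a = i then c * B $ j $ b else 0) else 0))"
    by (rule sum.cong) (auto simp: distrib_right)
  finally show ?thesis by (simp add: sum.distrib)
qed

lemma transvection_mult_right: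
  "(B ** transvection i j c) $ a $ b = B $ a $ b + (if b = j then B $ a $ i * c else 0)"
proof -
  have "(B ** transvection i j c) $ a $ b
      = (\<Sum>k\<in>UNIV. B $ a $ k * ((if k = b then 1 else 0) + (if k = i \<and> b = j then c else 0)))"
    by (simp add: matrix_matrix_mult_def transvection_def)
  also have "\<dots> = (\<Sum>k\<in>UNIV. (if k = b then B $ a $ b else 0) + (if k = i then (if b = j then B $ a $ i * c else 0) else 0))"
    by (rule sum.cong) (auto simp: distrib_left)
  finally show ?thesis by (simp add: sum.distrib)
qed

lemma swap_mat_mult_left: "(swap_mat i j ** B) $ a $ b = B $ (Transposition.transpose i j a) $ b"
proof -
  have "(swap_mat i j ** B) $ a $ b = (\<Sum>k\<in>UNIV. (if k = Transposition.transpose i j a then 1 else 0) * B $ k $ b)"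
    by (simp add: matrix_matrix_mult_def swap_mat_def)
  also have "\<dots> = (\<Sum>k\<in>UNIV. if k = Transposition.transpose i j a then B $ (Transposition.transpose i j a) $ b else 0)"
    by (rule sum.cong) auto
  finally show ?thesis by simp
qed

lemma swap_mat_mult_right: "(B ** swap_mat i j) $ a $ b = B $ a $ (Transposition.transpose i j b)"
proof -
  have "(B ** swap_mat i j) $ a $ b = (\<Sum>k\<in>UNIV. B $ a $ k * (if b = Transposition.transpose i j k then 1 else 0))"
    by (simp add: matrix_matrix_mult_def swap_mat_def)
  also have "\<dots> = (\<Sum>k\<in>UNIV. if k = Transposition.transpose i j b then B $ a $ (Transposition.transpose i j b) else 0)"
    by (rule sum.cong) (auto simp: transpose_eq_iff)
  finally show ?thesis by simp
qed

lemma diag_mat_inverse: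
  assumes "\<And>a. runit (x a)"
  shows "diag_mat x ** diag_mat (\<lambda>a. ring_inv (x a)) = mat 1"
    "diag_mat (\<lambda>a. ring_inv (x a)) ** diag_mat x = mat 1"
  unfolding diag_mat_mult mat_eq_diag_mat
  by (simp_all add: runit_right_inverse runit_left_inverse assms)

lemma diag_mat_GL: "(\<And>a. runit (x a)) \<Longrightarrow> diag_mat x \<in> GL_set"
  using diag_mat_inverse GL_setI by blast

lemma mat_inv_diag_mat: "(\<And>a. runit (x a)) \<Longrightarrow> mat_inv (diag_mat x) = diag_mat (\<lambda>a. ring_inv (x a))"
  using diag_mat_inverse mat_inv_unique by blast

lemma transvection_add: "i \<noteq> j \<Longrightarrow> transvection i j c ** transvection i j d = transvection i j (c + d)"
  by (simp add: vec_eq_iff transvection_mult_left) (simp add: transvection_def)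

lemma transvection_zero: "transvection i j 0 = mat 1"
  by (simp add: vec_eq_iff transvection_def mat_def)

lemma transvection_GL: "i \<noteq> j \<Longrightarrow> transvection i j c \<in> GL_set"
  using transvection_add[of i j c "-c"] transvection_zero GL_setI by (metis add.right_inverse)

lemma mat_inv_transvection: "i \<noteq> j \<Longrightarrow> mat_inv (transvection i j c) = transvection i j (- c)"
  using transvection_add[of i j c "-c"] transvection_add[of i j "-c" c] transvection_zero mat_inv_unique
  by (metis add.right_inverse add.left_inverse)

lemma swap_mat_involution: "swap_mat i j ** swap_mat i j = mat 1"
  by (simp add: vec_eq_iff swap_mat_mult_left) (simp add: swap_mat_def mat_def transpose_eq_iff)

lemma swap_mat_GL: "swap_mat i j \<in> GL_set"
  using swap_mat_involution GL_setI by blast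

lemma mat_inv_swap_mat: "mat_inv (swap_mat i j) = swap_mat i j"
  using swap_mat_involution mat_inv_unique by blast

lemma dilation_GL: "runit u \<Longrightarrow> dilation i u \<in> GL_set"
  unfolding dilation_def by (rule diag_mat_GL) simp

lemma Ad_diag_mat:
  "(\<And>a. runit (x a)) \<Longrightarrow> Ad (diag_mat x) Y $ a $ b = x a * Y $ a $ b * ring_inv (x b)"
  by (simp add: Ad_def mat_inv_diag_mat diag_mat_mult_left diag_mat_mult_right)

lemma Ad_transvection:
  "i \<noteq> j \<Longrightarrow> Ad (transvection i j c) Y $ a $ b = Y $ a $ b + (if a = i then c * Y $ j $ b else 0)
     - (if b = j then (Y $ a $ i + (if a = i then c * Y $ j $ i else 0)) * c else 0)"
  by (simp add: Ad_def mat_inv_transvection transvection_mult_left transvection_mult_right)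

lemma Ad_transvection_diagonal:
  assumes "i \<noteq> j" "\<And>a b. a \<noteq> b \<Longrightarrow> Y $ a $ b = 0"
  shows "Ad (transvection i j c) Y $ u $ v
    = Y $ u $ v + (if u = i \<and> v = j then c * (Y $ j $ j - Y $ i $ i) else 0)"
  using assms by (auto simp: Ad_transvection algebra_simps)

lemma Ad_swap_mat: "Ad (swap_mat i j) Y $ a $ b = Y $ (Transposition.transpose i j a) $ (Transposition.transpose i j b)"
  by (simp add: Ad_def mat_inv_swap_mat swap_mat_mult_left swap_mat_mult_right)

lemma coboundary_diag_mat_diag_entry:
  assumes "\<And>a. runit (x a)"
  shows "coboundary v (diag_mat x) $ a $ a = 0"
proof -
  have "x a * v $ a $ a * ring_inv (x a) = v $ a $ a * (x a * ring_inv (x a))"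
    by (simp add: ac_simps)
  then show ?thesis
    unfolding coboundary_def by (simp add: Ad_diag_mat[OF assms] runit_right_inverse[OF assms])
qed

lemma det_diag_mat: "det (diag_mat x) = (\<Prod>a\<in>UNIV. x a)"
  by (subst det_diagonal) (simp_all add: diag_mat_def)

lemma det_dilation: "det (dilation i u) = u"
  unfolding dilation_def det_diag_mat by (simp add: prod.delta)

lemma det_transvection:
  fixes c :: "'r::comm_ring_1" and i j :: "'n::finite"
  assumes "i \<noteq> j"
  shows "det (transvection i j c) = 1"
proof -
  have "transvection i j c = ((\<chi> k. if k = i then row i (mat 1) + c *s row j (mat 1) else row k (mat 1)) :: 'r^'n^'n)"
    using assms by (simp add: vec_eq_iff transvection_def row_def mat_def)
  then show ?thesis using det_row_operation[OF assms, of "mat 1" c] by simp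
qed

definition derivation :: "('r::comm_ring_1 \<Rightarrow> 'r) \<Rightarrow> bool" where
  "derivation D \<longleftrightarrow> (\<forall>a b. D (a + b) = D a + D b) \<and> (\<forall>a b. D (a * b) = a * D b + b * D a)"

lemma derivation_of_nat:
  assumes "derivation D"
  shows "D (of_nat n) = 0"
proof -
  have add: "D (a + b) = D a + D b" and mult: "D (a * b) = a * D b + b * D a" for a b
    using assms unfolding derivation_def by blast+
  have "D 1 = D 1 + D 1" using mult[of 1 1] by (simp only: mult_1_left)
  then have D1: "D 1 = 0" by (simp only: add_cancel_right_right)
  show ?thesis
  proof (induction n)
    case 0 show ?case using add[of 0 0] by (simp only: of_nat_0 add_0_left add_cancel_right_right)
  next
    case (Suc n)
    have "D (of_nat (Suc n)) = D 1 + D (of_nat n)" using add[of 1 "of_nat n"] by simp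
    with Suc D1 show ?case by simp
  qed
qed

lemma derivation_power:
  assumes "derivation D"
  shows "D (y ^ Suc n) = of_nat (Suc n) * y ^ n * D y"
proof (induction n)
  case (Suc n)
  have "D (y ^ Suc (Suc n)) = y * D (y ^ Suc n) + y ^ Suc n * D y"
    using assms unfolding derivation_def by simp
  with Suc show ?case by (simp add: algebra_simps)
qed simp

lemma two_neq_one [simp]: "(2::'a::ring_1) \<noteq> 1" "(1::'a) \<noteq> 2"
proof -
  show "(2::'a) \<noteq> 1"
  proof
    assume "(2::'a) = 1"
    then have "(2::'a) - 1 = 0" by simp
    then show False by simp
  qed
  then show "(1::'a) \<noteq> 2" by (rule not_sym)
qed

section \<open>Arithmetic of the ring R\<close>

locale delta_ring =
  fixes p :: nat and \<phi> :: "'r::idom \<Rightarrow> 'r"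
  assumes delta_setting: "delta_setting p \<phi>"
begin

abbreviation \<pi> :: 'r where "\<pi> \<equiv> of_nat p"

lemma prime_p: "prime p"
  using delta_setting unfolding delta_setting_def by (elim conjE) assumption

lemma odd_p: "odd p"
  using delta_setting unfolding delta_setting_def by (elim conjE) assumption

lemma p_neq_zero: "\<pi> \<noteq> 0"
  using delta_setting unfolding delta_setting_def by (elim conjE) assumption

lemma p_not_runit: "\<not> runit \<pi>"
  using delta_setting unfolding delta_setting_def by (elim conjE) assumption

lemma unit_times_p_power: "\<forall>x::'r. x \<noteq> 0 \<longrightarrow> (\<exists>u k. runit u \<and> x = u * \<pi> ^ k)"
  using delta_setting unfolding delta_setting_def by (elim conjE) assumption

lemma complete_padic: "\<forall>X::nat \<Rightarrow> 'r. (\<forall>k. \<exists>N. \<forall>m\<ge>N. \<pi> ^ k dvd (X m - X N)) \<longrightarrow>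
     (\<exists>L. \<forall>k. \<exists>N. \<forall>m\<ge>N. \<pi> ^ k dvd (X m - L))"
  using delta_setting unfolding delta_setting_def by (elim conjE) assumption

lemma residue_field_algebraic: "\<forall>a::'r. \<exists>k\<ge>1. \<pi> dvd (a ^ (p ^ k) - a)"
  using delta_setting unfolding delta_setting_def by (elim conjE) assumption

lemma p_not_dvd_one: "\<not> \<pi> dvd 1"
proof
  assume "\<pi> dvd 1"
  then obtain c where "1 = \<pi> * c" by (rule dvdE)
  then have "runit \<pi>" unfolding runit_def by (intro exI[of _ c]) simp
  with p_not_runit show False ..
qed

lemma runit_iff_not_p_dvd: "runit x \<longleftrightarrow> \<not> \<pi> dvd x"
proof
  assume "runit x"
  then obtain y where "x * y = 1" unfolding runit_def by blast
  then show "\<not> \<pi> dvd x"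
    using p_not_dvd_one dvd_mult2[of \<pi> x y] by auto
next
  assume nd: "\<not> \<pi> dvd x"
  then have "x \<noteq> 0" by auto
  then obtain u k where u: "runit u" "x = u * \<pi> ^ k"
    using unit_times_p_power by blast
  with nd have "k = 0" by (cases k) auto
  with u show "runit x" by simp
qed

lemma zero_if_dvd_all_powers:
  assumes "\<And>k. \<pi> ^ k dvd x"
  shows "x = 0"
proof (rule ccontr)
  assume "x \<noteq> 0"
  then obtain u k where u: "runit u" "x = u * \<pi> ^ k"
    using unit_times_p_power by blast
  obtain c where "x = \<pi> ^ Suc k * c" using assms by blast
  with u have "u = \<pi> * c" using p_neq_zero by (auto simp: ac_simps)
  with u show False using runit_iff_not_p_dvd by simp
qed

lemma runit_of_nat: "coprime m p \<Longrightarrow> runit (of_nat m :: 'r)"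
proof -
  assume cop: "coprime m p"
  have "m \<noteq> 0"
  proof
    assume "m = 0"
    with cop have "p = 1" by simp
    with prime_p show False by simp
  qed
  then obtain a b where "m * a = p * b + 1" using bezout_nat[of m p] cop by auto
  then have "(of_nat m :: 'r) * of_nat a = \<pi> * of_nat b + 1"
    by (metis of_nat_1 of_nat_add of_nat_mult)
  then have "(of_nat m :: 'r) * of_nat a - \<pi> * of_nat b = 1" by simp
  moreover have "\<pi> dvd of_nat m * of_nat a - \<pi> * of_nat b" if "\<pi> dvd of_nat m"
    using that by (simp add: dvd_diff)
  ultimately show ?thesis using runit_iff_not_p_dvd p_not_dvd_one by auto
qed

lemma runit_two: "runit (2::'r)"
proof -
  have "coprime 2 p" using odd_p by simp
  then show ?thesis using runit_of_nat[of 2] by simp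
qed

lemma of_nat_neq_zero: "m > 0 \<Longrightarrow> (of_nat m :: 'r) \<noteq> 0"
proof (induction m rule: less_induct)
  case (less m)
  show ?case
  proof (cases "p dvd m")
    case True
    then obtain m' where m': "m = p * m'" by blast
    with less.prems have "m' > 0" by simp
    then have "m' < m" unfolding m' using prime_gt_1_nat[OF prime_p] n_less_n_mult_m[of m' p]
      by (simp add: mult.commute)
    with less.IH \<open>m' > 0\<close> have "(of_nat m' :: 'r) \<noteq> 0" by blast
    with m' p_neq_zero show ?thesis by simp
  next
    case False
    then have "coprime m p" using prime_imp_coprime[OF prime_p] by (simp add: coprime_commute)
    then obtain y where "(of_nat m :: 'r) * y = 1" using runit_of_nat unfolding runit_def by blast
    then show ?thesis by auto
  qed
qed

lemma runit_or_runit_diff_one: "runit x \<or> runit (x - 1 :: 'r)"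
proof (rule disjCI)
  assume "\<not> runit (x - 1)"
  then have "\<pi> dvd x - 1" using runit_iff_not_p_dvd by blast
  moreover have "\<pi> dvd x - 1 \<Longrightarrow> \<pi> dvd x \<Longrightarrow> \<pi> dvd 1"
    using dvd_diff[of \<pi> x "x - 1"] by simp
  ultimately show "runit x" using runit_iff_not_p_dvd p_not_dvd_one by blast
qed

lemma limit_exists:
  assumes cauchy: "\<And>k k'. k \<le> k' \<Longrightarrow> \<pi> ^ k dvd (S k' - S k)"
  shows "\<exists>L. \<forall>k. \<pi> ^ k dvd (S k - L)"
proof -
  have "\<forall>k. \<exists>N. \<forall>m\<ge>N. \<pi> ^ k dvd (S m - S N)" using cauchy by blast
  then obtain L where L: "\<And>k. \<exists>N. \<forall>m\<ge>N. \<pi> ^ k dvd (S m - L)"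
    using complete_padic by blast
  have "\<pi> ^ k dvd (S k - L)" for k
  proof -
    obtain N where "\<forall>m\<ge>N. \<pi> ^ k dvd (S m - L)" using L by blast
    then have "\<pi> ^ k dvd (S (max N k) - L)" by simp
    moreover have "\<pi> ^ k dvd (S (max N k) - S k)" by (rule cauchy) simp
    ultimately have "\<pi> ^ k dvd (S (max N k) - L) - (S (max N k) - S k)"
      by (rule dvd_diff)
    then show ?thesis by simp
  qed
  then show ?thesis by blast
qed

lemma power_congruence: "\<exists>N>0. \<pi> dvd (y ^ N - y) \<and> p ^ m dvd N"
proof -
  obtain k where k: "k \<ge> 1" "\<pi> dvd (y ^ (p ^ k) - y)"
    using residue_field_algebraic by blast
  define q where "q = p ^ k"
  have cong: "\<pi> dvd (y ^ (q ^ j) - y)" for j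
  proof (induction j)
    case (Suc j)
    have "y ^ q ^ j - y dvd (y ^ q ^ j) ^ q - y ^ q"
      using power_diff_sumr2[of "y ^ q ^ j" q y] by simp
    then have "\<pi> dvd (y ^ q ^ j) ^ q - y ^ q" using Suc dvd_trans by blast
    then have "\<pi> dvd ((y ^ q ^ j) ^ q - y ^ q) + (y ^ q - y)" using k(2) q_def dvd_add by blast
    then show ?case by (simp add: power_mult[symmetric] mult.commute)
  qed simp
  have "p ^ m dvd q ^ m" using k(1) unfolding q_def power_mult[symmetric] by (simp add: le_imp_power_dvd)
  moreover have "q ^ m > 0" using prime_p q_def by (simp add: prime_gt_0_nat)
  ultimately show ?thesis using cong[of m] by blast
qed

lemma derivation_from_units:
  fixes D :: "'r \<Rightarrow> 'r"
  assumes add: "\<And>a b. D (a + b) = D a + D b"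
    and leibniz_unit: "\<And>s a. runit s \<Longrightarrow> D (s * a) = s * D a + a * D s"
  shows "derivation D"
  unfolding derivation_def
proof (intro conjI allI)
  show "D (a + b) = D a + D b" for a b by (rule add)
  have "D 1 = D 1 + D 1" using leibniz_unit[OF runit_one, of 1] by (simp only: mult_1_left)
  then have D1: "D 1 = 0" by (simp only: add_cancel_right_right)
  show "D (y * a) = y * D a + a * D y" for y a
  proof (cases "runit y")
    case False
    then have u: "runit (y - 1)" using runit_or_runit_diff_one by blast
    have "D (y * a) = D ((y - 1) * a) + D a" using add[of "(y - 1) * a" a] by (simp add: algebra_simps)
    moreover have "D y = D (y - 1)" using add[of "y - 1" 1] D1 by simp
    ultimately show ?thesis using leibniz_unit[OF u, of a] by (simp add: algebra_simps)
  qed (rule leibniz_unit)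
qed

text \<open>Writing \<open>y = y\<^sup>N - p z\<close> with \<open>p\<^sup>m\<close> dividing \<open>N\<close> gives \<open>D y = N y\<^sup>N\<^sup>-\<^sup>1 D y - p D z\<close>, so by induction
  \<open>D y\<close> is divisible by every power of \<open>p\<close>.\<close>

lemma derivation_vanishes:
  fixes D :: "'r \<Rightarrow> 'r"
  assumes D: "derivation D"
  shows "D x = 0"
proof -
  have "\<pi> ^ m dvd D y" for m y
  proof (induction m arbitrary: y)
    case (Suc m)
    obtain N where N: "N > 0" "\<pi> dvd (y ^ N - y)" "p ^ Suc m dvd N" using power_congruence by blast
    obtain z where z: "y ^ N - y = \<pi> * z" using N(2) by (rule dvdE)
    obtain N' where N': "N = Suc N'" using N(1) gr0_implies_Suc by blast
    obtain e where e: "N = p ^ Suc m * e" using N(3) by (rule dvdE)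
    have "y ^ N = y + \<pi> * z" using z by (simp add: algebra_simps)
    then have "D (y ^ N) = D y + \<pi> * D z"
      using D unfolding derivation_def by (simp add: derivation_of_nat[OF D])
    then have "D y = D (y ^ N) - \<pi> * D z" by (simp add: eq_diff_eq)
    also have "D (y ^ N) = of_nat N * (y ^ N' * D y)"
      using derivation_power[OF D, of y N'] unfolding N' by (simp only: mult.assoc)
    also have "(of_nat N :: 'r) = \<pi> ^ Suc m * of_nat e" using e by simp
    finally have Dy: "D y = \<pi> ^ Suc m * (of_nat e * (y ^ N' * D y)) - \<pi> * D z"
      by (simp only: mult.assoc)
    have "\<pi> ^ Suc m dvd \<pi> * D z" using Suc.IH by simp
    then show ?case by (subst Dy) (simp add: dvd_diff)
  qed simp
  then show ?thesis using zero_if_dvd_all_powers by blast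
qed

end

section \<open>Generation of \<open>GL\<^sub>n(R)\<close> by transvections and diagonal matrices\<close>

inductive_set elementary_products :: "('r::idom^'n::finite^'n) set" where
  one: "mat 1 \<in> elementary_products"
| transvection: "g \<in> elementary_products \<Longrightarrow> i \<noteq> j \<Longrightarrow> transvection i j c ** g \<in> elementary_products"
| diagonal: "g \<in> elementary_products \<Longrightarrow> (\<And>l. runit (x l)) \<Longrightarrow> diag_mat x ** g \<in> elementary_products"

lemma elementary_products_GL: "g \<in> elementary_products \<Longrightarrow> g \<in> GL_set"
proof (induction rule: elementary_products.induct)
  case one show ?case by (rule GL_one)
next
  case (transvection g i j c) then show ?case using GL_mult transvection_GL by blast
next
  case (diagonal g x) then show ?case using GL_mult diag_mat_GL by blast
qed

lemma elementary_products_cancel_transvection: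
  assumes "i \<noteq> j" "transvection i j c ** g \<in> elementary_products"
  shows "g \<in> elementary_products"
proof -
  have "transvection i j (- c) ** (transvection i j c ** g) \<in> elementary_products"
    by (rule elementary_products.transvection[OF assms(2,1)])
  moreover have "transvection i j (- c) ** (transvection i j c ** g) = g"
    by (simp add: matrix_mul_assoc transvection_add[OF assms(1)] transvection_zero)
  ultimately show ?thesis by simp
qed

lemma elementary_products_cancel_diagonal:
  assumes "\<And>l. runit (x l)" "diag_mat x ** g \<in> elementary_products"
  shows "g \<in> elementary_products"
proof -
  have "diag_mat (\<lambda>l. ring_inv (x l)) ** (diag_mat x ** g) \<in> elementary_products"
    by (rule elementary_products.diagonal[OF assms(2)]) (simp add: runit_ring_inv assms(1))
  moreover have "diag_mat (\<lambda>l. ring_inv (x l)) ** (diag_mat x ** g) = g"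
    by (simp add: matrix_mul_assoc diag_mat_inverse(2)[OF assms(1)])
  ultimately show ?thesis by simp
qed

definition std_column :: "'r::comm_ring_1^'n^'n \<Rightarrow> 'n \<Rightarrow> bool" where
  "std_column g j \<longleftrightarrow> (\<forall>l. g $ l $ j = (if l = j then 1 else 0))"

lemma std_column_transvection:
  "std_column g k \<Longrightarrow> j \<noteq> k \<Longrightarrow> std_column (transvection i j c ** g) k"
  unfolding std_column_def by (simp add: transvection_mult_left)

lemma std_column_diagonal:
  "std_column g k \<Longrightarrow> x k = 1 \<Longrightarrow> std_column (diag_mat x ** g) k"
  unfolding std_column_def by (simp add: diag_mat_mult_left)

lemma mat_one_iff_std_columns: "g = mat 1 \<longleftrightarrow> (\<forall>j. std_column g j)"
  unfolding std_column_def by (auto simp: vec_eq_iff mat_def)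

context delta_ring
begin

text \<open>Otherwise every term of the Leibniz expansion of \<open>det g\<close> would be divisible by \<open>p\<close>: its factor
  \<open>g\<^sub>l\<^sub>j\<close> from column \<open>j\<close> is, if column \<open>l\<close> is non-standard, and otherwise its factor from the
  standard column \<open>l\<close> is an off-diagonal zero.\<close>

lemma unit_entry_in_nonstd_row:
  assumes g: "g \<in> (GL_set :: ('r^'n::finite^'n) set)" and j: "\<not> std_column g j"
  shows "\<exists>m. \<not> std_column g m \<and> runit (g $ m $ j)"
proof (rule ccontr)
  assume "\<nexists>m. \<not> std_column g m \<and> runit (g $ m $ j)"
  then have nonstd: "\<And>m. \<not> std_column g m \<Longrightarrow> \<pi> dvd g $ m $ j"
    using runit_iff_not_p_dvd by blast
  have "\<pi> dvd (\<Prod>l\<in>UNIV. g $ l $ q l)" if q: "q permutes (UNIV::'n set)" for q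
  proof (cases "std_column g (inv q j)")
    case False
    then have "\<pi> dvd g $ inv q j $ q (inv q j)"
      using nonstd permutes_inverses(1)[OF q] by simp
    then show ?thesis by (rule dvd_trans) (rule dvd_prodI; simp)
  next
    case True
    define l where "l = inv q (inv q j)"
    have "q l = inv q j" "inv q j \<noteq> j"
      using True j permutes_inverses(1)[OF q] unfolding l_def by auto
    then have "l \<noteq> inv q j" using permutes_inverses(1)[OF q] by (metis)
    then have "g $ l $ q l = 0" using True \<open>q l = inv q j\<close> unfolding std_column_def by simp
    have "(\<Prod>l\<in>UNIV. g $ l $ q l) = 0"
      by (rule prod_zero) (use \<open>g $ l $ q l = 0\<close> in auto)
    then show ?thesis by (simp only: dvd_0_right)
  qed
  then have "\<pi> dvd det g" unfolding det_def by (intro dvd_sum dvd_mult) auto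
  with GL_det_unit[OF g] show False using runit_iff_not_p_dvd by blast
qed

lemma clear_column:
  "finite L \<Longrightarrow> j \<notin> L \<Longrightarrow> g \<in> GL_set \<Longrightarrow> g $ j $ j = 1 \<Longrightarrow>
    \<exists>g'::'r^'n^'n. g' \<in> GL_set \<and> (g' \<in> elementary_products \<longrightarrow> g \<in> elementary_products) \<and> g' $ j $ j = 1
      \<and> (\<forall>l\<in>L. g' $ l $ j = 0) \<and> (\<forall>k. std_column g k \<and> k \<noteq> j \<longrightarrow> std_column g' k)"
  for g :: "'r^'n::finite^'n"
proof (induction L arbitrary: g rule: finite_induct)
  case (insert l L)
  have "j \<notin> L" using insert.prems by simp
  obtain g' :: "'r^'n^'n" where g': "g' \<in> GL_set" "g' \<in> elementary_products \<longrightarrow> g \<in> elementary_products"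
    "g' $ j $ j = 1" "\<forall>l\<in>L. g' $ l $ j = 0" "\<forall>k. std_column g k \<and> k \<noteq> j \<longrightarrow> std_column g' k"
    using insert.IH[OF \<open>j \<notin> L\<close> insert.prems(2,3)] by blast
  have lj: "l \<noteq> j" using insert.prems by auto
  let ?g = "transvection l j (- g' $ l $ j) ** g'"
  have "?g \<in> GL_set" using GL_mult[OF transvection_GL[OF lj] g'(1)] .
  moreover have "?g \<in> elementary_products \<longrightarrow> g \<in> elementary_products"
    using elementary_products_cancel_transvection[OF lj] g'(2) by blast
  moreover have "?g $ j $ j = 1" "\<forall>a\<in>insert l L. ?g $ a $ j = 0"
    using lj g'(3,4) insert.hyps by (auto simp: transvection_mult_left)
  moreover have "\<forall>k. std_column g k \<and> k \<noteq> j \<longrightarrow> std_column ?g k"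
  proof (intro allI impI)
    fix k assume k: "std_column g k \<and> k \<noteq> j"
    with g'(5) have "std_column g' k" by blast
    then show "std_column ?g k" by (rule std_column_transvection) (use k in auto)
  qed
  ultimately show ?case by (intro exI[of _ ?g]) blast
qed (intro exI, auto)

lemma unit_pivot:
  assumes g: "g \<in> (GL_set :: ('r^'n::finite^'n) set)" and j: "\<not> std_column g j"
  shows "\<exists>g'::'r^'n^'n. g' \<in> GL_set \<and> (g' \<in> elementary_products \<longrightarrow> g \<in> elementary_products)
    \<and> runit (g' $ j $ j) \<and> (\<forall>k. std_column g k \<longrightarrow> std_column g' k)"
proof (cases "runit (g $ j $ j)")
  case False
  obtain m where m: "\<not> std_column g m" "runit (g $ m $ j)"
    using unit_entry_in_nonstd_row[OF g j] by blast
  with False have mj: "m \<noteq> j" by auto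
  let ?g = "transvection j m 1 ** g"
  have "?g \<in> GL_set" using GL_mult[OF transvection_GL g] mj by auto
  moreover have "?g \<in> elementary_products \<longrightarrow> g \<in> elementary_products"
    using elementary_products_cancel_transvection[of j m 1 g] mj by auto
  moreover have "runit (?g $ j $ j)"
  proof -
    have "\<pi> dvd g $ j $ j" "\<not> \<pi> dvd g $ m $ j" using False m(2) runit_iff_not_p_dvd by blast+
    then have "\<not> \<pi> dvd (g $ j $ j + g $ m $ j)" by (simp add: dvd_add_right_iff)
    then show ?thesis by (simp add: transvection_mult_left runit_iff_not_p_dvd)
  qed
  moreover have "\<forall>k. std_column g k \<longrightarrow> std_column ?g k"
  proof (intro allI impI)
    fix k assume "std_column g k"
    moreover from this have "m \<noteq> k" using m(1) by auto
    ultimately show "std_column ?g k" by (rule std_column_transvection)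
  qed
  ultimately show ?thesis by (intro exI[of _ ?g]) blast
next
  case True
  with g show ?thesis by (intro exI[of _ g]) auto
qed

lemma reduce_column:
  assumes g: "g \<in> (GL_set :: ('r^'n::finite^'n) set)" and j: "\<not> std_column g j"
  shows "\<exists>g'::'r^'n^'n. g' \<in> GL_set \<and> (g' \<in> elementary_products \<longrightarrow> g \<in> elementary_products)
    \<and> std_column g' j \<and> (\<forall>k. std_column g k \<longrightarrow> std_column g' k)"
proof -
  obtain g1 :: "'r^'n^'n" where g1: "g1 \<in> GL_set" "g1 \<in> elementary_products \<longrightarrow> g \<in> elementary_products"
    "runit (g1 $ j $ j)" "\<forall>k. std_column g k \<longrightarrow> std_column g1 k"
    using unit_pivot[OF g j] by blast
  define x :: "'n \<Rightarrow> 'r" where "x = (\<lambda>l. if l = j then ring_inv (g1 $ j $ j) else 1)"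
  have x: "\<And>l. runit (x l)" unfolding x_def using runit_ring_inv[OF g1(3)] by simp
  let ?g2 = "diag_mat x ** g1"
  have g2: "?g2 \<in> GL_set" using GL_mult[OF diag_mat_GL[OF x] g1(1)] .
  have "?g2 $ j $ j = 1"
    using runit_left_inverse[OF g1(3)] unfolding x_def by (simp add: diag_mat_mult_left)
  then obtain g3 :: "'r^'n^'n" where g3: "g3 \<in> GL_set" "g3 \<in> elementary_products \<longrightarrow> ?g2 \<in> elementary_products"
    "g3 $ j $ j = 1" "\<forall>l\<in>UNIV - {j}. g3 $ l $ j = 0"
    "\<forall>k. std_column ?g2 k \<and> k \<noteq> j \<longrightarrow> std_column g3 k"
    using clear_column[of "UNIV - {j}" j ?g2] g2 by auto
  have "std_column g3 j" using g3(3,4) unfolding std_column_def by auto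
  moreover have "std_column g3 k" if "std_column g k" for k
  proof -
    have "k \<noteq> j" using that j by auto
    then have "std_column ?g2 k" using std_column_diagonal[of g1 k x] g1(4) that unfolding x_def by simp
    then show ?thesis using g3(5) \<open>k \<noteq> j\<close> by blast
  qed
  moreover have "g3 \<in> elementary_products \<longrightarrow> g \<in> elementary_products"
    using g3(2) g1(2) elementary_products_cancel_diagonal[of x g1] x by blast
  ultimately show ?thesis using g3(1) by blast
qed

lemma GL_subset_elementary_products: "(GL_set :: ('r^'n::finite^'n) set) \<subseteq> elementary_products"
proof
  fix g :: "'r^'n^'n" assume "g \<in> GL_set"
  then show "g \<in> elementary_products"
  proof (induction "card {k. \<not> std_column g k}" arbitrary: g rule: less_induct)
    case less
    show ?case
    proof (cases "\<forall>j. std_column g j")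
      case True
      then have "g = mat 1" using mat_one_iff_std_columns by blast
      then show ?thesis using elementary_products.one by simp
    next
      case False
      then obtain j where j: "\<not> std_column g j" by blast
      obtain g' :: "'r^'n^'n" where g': "g' \<in> GL_set" "g' \<in> elementary_products \<longrightarrow> g \<in> elementary_products"
        "std_column g' j" "\<forall>k. std_column g k \<longrightarrow> std_column g' k"
        using reduce_column[OF less.prems j] by blast
      have "{k. \<not> std_column g' k} \<subset> {k. \<not> std_column g k}" using g'(3,4) j by auto
      then have "card {k. \<not> std_column g' k} < card {k. \<not> std_column g k}"
        by (rule psubset_card_mono[OF finite])
      then show ?thesis using less.hyps g' by blast
    qed
  qed
qed

end

section \<open>Restricted power series with some variables frozen\<close>

lemma mon_eval_reindex:
  assumes "finite {v. \<alpha> v \<noteq> 0}" "inj h"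
  shows "mon_eval \<alpha> a = mon_eval (\<alpha> \<circ> h) (a \<circ> h) * (\<Prod>v\<in>{v. \<alpha> v \<noteq> 0} - range h. a v ^ \<alpha> v)"
proof -
  let ?S = "{v. \<alpha> v \<noteq> 0}"
  have "mon_eval \<alpha> a = (\<Prod>v\<in>?S \<inter> range h. a v ^ \<alpha> v) * (\<Prod>v\<in>?S - range h. a v ^ \<alpha> v)"
    unfolding mon_eval_def by (rule prod.Int_Diff[OF assms(1)])
  also have "?S \<inter> range h = h ` {w. (\<alpha> \<circ> h) w \<noteq> 0}" by auto
  also have "(\<Prod>v\<in>h ` {w. (\<alpha> \<circ> h) w \<noteq> 0}. a v ^ \<alpha> v) = mon_eval (\<alpha> \<circ> h) (a \<circ> h)"
    unfolding mon_eval_def using assms(2) by (subst prod.reindex) (auto intro: inj_on_subset)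
  finally show ?thesis .
qed

text \<open>The coefficients of \<open>frozen_series\<close> are \<open>p\<close>-adic limits, because once the variables outside
  the range of \<open>h\<close> are fixed to \<open>a\<^sub>0\<close>, infinitely many monomials of \<open>c\<close> may collapse onto one.\<close>

locale rps_freeze = delta_ring p \<phi> for p :: nat and \<phi> :: "'r::idom \<Rightarrow> 'r" +
  fixes V :: "'v set" and c :: "('v \<Rightarrow> nat) \<Rightarrow> 'r" and h :: "'w \<Rightarrow> 'v" and a\<^sub>0 :: "'v \<Rightarrow> 'r"
  assumes rps: "rps p V c" and inj: "inj h"
begin

definition truncated_coeff :: "nat \<Rightarrow> ('w \<Rightarrow> nat) \<Rightarrow> 'r" where
  "truncated_coeff k \<beta> = (\<Sum>\<alpha>\<in>{\<alpha>. \<not> \<pi> ^ k dvd c \<alpha> \<and> \<alpha> \<circ> h = \<beta>}.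
     c \<alpha> * (\<Prod>v\<in>{v. \<alpha> v \<noteq> 0} - range h. a\<^sub>0 v ^ \<alpha> v))"

definition frozen_series :: "('w \<Rightarrow> nat) \<Rightarrow> 'r" where
  "frozen_series \<beta> = (SOME L. \<forall>k. \<pi> ^ k dvd (truncated_coeff k \<beta> - L))"

lemma finite_nondivisible_coeffs: "finite {\<alpha>. \<not> \<pi> ^ k dvd c \<alpha>}"
  using rps unfolding rps_def by blast

lemma truncated_coeff_cauchy:
  assumes "k \<le> k'"
  shows "\<pi> ^ k dvd (truncated_coeff k' \<beta> - truncated_coeff k \<beta>)"
proof -
  let ?A = "\<lambda>k. {\<alpha>. \<not> \<pi> ^ k dvd c \<alpha> \<and> \<alpha> \<circ> h = \<beta>}"
  have sub: "?A k \<subseteq> ?A k'"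
  proof
    fix \<alpha> assume "\<alpha> \<in> ?A k"
    then show "\<alpha> \<in> ?A k'" using dvd_trans[OF le_imp_power_dvd[OF assms]] by auto
  qed
  have fin: "finite (?A k')"
    using finite_nondivisible_coeffs[of k'] by (rule finite_subset[rotated]) auto
  have "truncated_coeff k' \<beta> - truncated_coeff k \<beta>
      = (\<Sum>\<alpha>\<in>?A k' - ?A k. c \<alpha> * (\<Prod>v\<in>{v. \<alpha> v \<noteq> 0} - range h. a\<^sub>0 v ^ \<alpha> v))"
    unfolding truncated_coeff_def using sum.subset_diff[OF sub fin] by (simp add: algebra_simps)
  also have "\<pi> ^ k dvd \<dots>" by (intro dvd_sum) auto
  finally show ?thesis .
qed

lemma frozen_series_approx: "\<pi> ^ k dvd (truncated_coeff k \<beta> - frozen_series \<beta>)"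
proof -
  have "\<exists>L. \<forall>k. \<pi> ^ k dvd (truncated_coeff k \<beta> - L)"
    by (rule limit_exists) (rule truncated_coeff_cauchy)
  then show ?thesis unfolding frozen_series_def by (rule someI_ex[THEN spec])
qed

lemma frozen_series_support:
  assumes "\<not> \<pi> ^ k dvd frozen_series \<beta>"
  shows "\<exists>\<alpha>. \<not> \<pi> ^ k dvd c \<alpha> \<and> \<alpha> \<circ> h = \<beta>"
proof (rule ccontr)
  assume "\<nexists>\<alpha>. \<not> \<pi> ^ k dvd c \<alpha> \<and> \<alpha> \<circ> h = \<beta>"
  then have "{\<alpha>. \<not> \<pi> ^ k dvd c \<alpha> \<and> \<alpha> \<circ> h = \<beta>} = {}" by blast
  then have "truncated_coeff k \<beta> = 0" unfolding truncated_coeff_def by (simp only: sum.empty)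
  then show False using frozen_series_approx[of k \<beta>] assms by simp
qed

lemma rps_frozen_series: "rps p (h -` V) frozen_series"
  unfolding rps_def
proof (intro conjI allI impI)
  fix \<beta> assume "frozen_series \<beta> \<noteq> 0"
  then obtain k where "\<not> \<pi> ^ k dvd frozen_series \<beta>" using zero_if_dvd_all_powers by blast
  then obtain \<alpha> where \<alpha>: "\<not> \<pi> ^ k dvd c \<alpha>" "\<beta> = \<alpha> \<circ> h" using frozen_series_support by blast
  then have "c \<alpha> \<noteq> 0" by auto
  then have fin: "finite {v. \<alpha> v \<noteq> 0}" and sub: "{v. \<alpha> v \<noteq> 0} \<subseteq> V"
    using rps unfolding rps_def by blast+
  have supp: "{w. \<beta> w \<noteq> 0} = h -` {v. \<alpha> v \<noteq> 0}" using \<alpha>(2) by auto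
  show "finite {w. \<beta> w \<noteq> 0}" unfolding supp using fin inj by (rule finite_vimageI)
  show "{w. \<beta> w \<noteq> 0} \<subseteq> h -` V" unfolding supp using sub by blast
next
  fix k
  have "{\<beta>. \<not> \<pi> ^ k dvd frozen_series \<beta>} \<subseteq> (\<lambda>\<alpha>. \<alpha> \<circ> h) ` {\<alpha>. \<not> \<pi> ^ k dvd c \<alpha>}"
    using frozen_series_support by blast
  then show "finite {\<beta>. \<not> \<pi> ^ k dvd frozen_series \<beta>}"
    using finite_nondivisible_coeffs finite_subset by blast
qed

lemma truncation_frozen:
  assumes frozen: "\<And>v. v \<notin> range h \<Longrightarrow> a v = a\<^sub>0 v"
  shows "(\<Sum>\<alpha>\<in>{\<alpha>. \<not> \<pi> ^ k dvd c \<alpha>}. c \<alpha> * mon_eval \<alpha> a)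
    = (\<Sum>\<beta>\<in>(\<lambda>\<alpha>. \<alpha> \<circ> h) ` {\<alpha>. \<not> \<pi> ^ k dvd c \<alpha>}. truncated_coeff k \<beta> * mon_eval \<beta> (a \<circ> h))"
    (is "(\<Sum>\<alpha>\<in>?A. _) = _")
proof -
  let ?frozen = "\<lambda>\<alpha>. \<Prod>v\<in>{v. \<alpha> v \<noteq> 0} - range h. a\<^sub>0 v ^ \<alpha> v"
  have "(\<Sum>\<alpha>\<in>?A. c \<alpha> * mon_eval \<alpha> a) = (\<Sum>\<alpha>\<in>?A. c \<alpha> * ?frozen \<alpha> * mon_eval (\<alpha> \<circ> h) (a \<circ> h))"
  proof (rule sum.cong[OF refl])
    fix \<alpha> assume "\<alpha> \<in> ?A"
    then have "c \<alpha> \<noteq> 0" by auto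
    then have "finite {v. \<alpha> v \<noteq> 0}" using rps unfolding rps_def by blast
    then have "mon_eval \<alpha> a = mon_eval (\<alpha> \<circ> h) (a \<circ> h) * (\<Prod>v\<in>{v. \<alpha> v \<noteq> 0} - range h. a v ^ \<alpha> v)"
      using inj by (rule mon_eval_reindex)
    also have "(\<Prod>v\<in>{v. \<alpha> v \<noteq> 0} - range h. a v ^ \<alpha> v) = ?frozen \<alpha>"
      using frozen by (intro prod.cong) auto
    finally show "c \<alpha> * mon_eval \<alpha> a = c \<alpha> * ?frozen \<alpha> * mon_eval (\<alpha> \<circ> h) (a \<circ> h)"
      by (simp only: ac_simps)
  qed
  also have "\<dots> = (\<Sum>\<beta>\<in>(\<lambda>\<alpha>. \<alpha> \<circ> h) ` ?A. truncated_coeff k \<beta> * mon_eval \<beta> (a \<circ> h))"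
    unfolding truncated_coeff_def sum_distrib_right
    by (subst sum.image_gen[OF finite_nondivisible_coeffs]) (auto intro!: sum.cong)
  finally show ?thesis .
qed

lemma rps_val_frozen_series:
  assumes frozen: "\<And>v. v \<notin> range h \<Longrightarrow> a v = a\<^sub>0 v" and val: "rps_val p c a y"
  shows "rps_val p frozen_series (a \<circ> h) y"
  unfolding rps_val_def
proof
  fix k
  let ?A = "{\<alpha>. \<not> \<pi> ^ k dvd c \<alpha>}" and ?B = "{\<beta>. \<not> \<pi> ^ k dvd frozen_series \<beta>}"
  let ?T = "(\<lambda>\<alpha>. \<alpha> \<circ> h) ` ?A"
  let ?m = "\<lambda>\<beta>. mon_eval \<beta> (a \<circ> h)"
  have "\<pi> ^ k dvd (\<Sum>\<beta>\<in>?T. truncated_coeff k \<beta> * ?m \<beta>) - (\<Sum>\<beta>\<in>?T. frozen_series \<beta> * ?m \<beta>)"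
    unfolding sum_subtractf[symmetric] left_diff_distrib[symmetric]
    by (intro dvd_sum dvd_mult2 frozen_series_approx)
  moreover have "\<pi> ^ k dvd (\<Sum>\<beta>\<in>?T. frozen_series \<beta> * ?m \<beta>) - (\<Sum>\<beta>\<in>?B. frozen_series \<beta> * ?m \<beta>)"
  proof -
    have "?B \<subseteq> ?T" using frozen_series_support by blast
    then have "(\<Sum>\<beta>\<in>?T. frozen_series \<beta> * ?m \<beta>) - (\<Sum>\<beta>\<in>?B. frozen_series \<beta> * ?m \<beta>)
        = (\<Sum>\<beta>\<in>?T - ?B. frozen_series \<beta> * ?m \<beta>)"
      using sum.subset_diff[of ?B ?T] finite_nondivisible_coeffs by (simp add: algebra_simps)
    also have "\<pi> ^ k dvd \<dots>" by (intro dvd_sum) auto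
    finally show ?thesis .
  qed
  moreover have "\<pi> ^ k dvd y - (\<Sum>\<beta>\<in>?T. truncated_coeff k \<beta> * ?m \<beta>)"
    using val truncation_frozen[OF frozen] unfolding rps_val_def by metis
  ultimately have "\<pi> ^ k dvd (y - (\<Sum>\<beta>\<in>?T. truncated_coeff k \<beta> * ?m \<beta>))
      + ((\<Sum>\<beta>\<in>?T. truncated_coeff k \<beta> * ?m \<beta>) - (\<Sum>\<beta>\<in>?T. frozen_series \<beta> * ?m \<beta>))
      + ((\<Sum>\<beta>\<in>?T. frozen_series \<beta> * ?m \<beta>) - (\<Sum>\<beta>\<in>?B. frozen_series \<beta> * ?m \<beta>))"
    by (intro dvd_add)
  then show "\<pi> ^ k dvd y - (\<Sum>\<beta>\<in>?B. frozen_series \<beta> * ?m \<beta>)"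
    by (simp add: algebra_simps)
qed

end

lemma dilation_entry: "dilation i u $ a $ b = (if a = b then if a = i then u else 1 else 0)"
  by (simp add: dilation_def diag_mat_def)

lemma GL_point_dilation_diag:
  "GL_point p \<phi> (dilation i u) \<circ> map_option (\<lambda>l. (l, i, i)) = Gm_point p \<phi> u"
  by (auto simp: fun_eq_iff GL_point_def Gm_point_def det_dilation dilation_entry split: option.splits)

lemma GL_point_dilation_other:
  assumes v: "v \<notin> range (map_option (\<lambda>l. (l, i, i)))"
  shows "GL_point p \<phi> (dilation i u) v = GL_point p \<phi> (mat 1) v"
proof (cases v)
  case None
  with v show ?thesis by (metis option.map(1) rangeI)
next
  case (Some t)
  obtain l a b where t: "t = (l, a, b)" by (cases t)
  have "\<not> (a = i \<and> b = i)"
  proof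
    assume "a = i \<and> b = i"
    then have "v = map_option (\<lambda>l. (l, i, i)) (Some l)" using Some t by simp
    with v show False by blast
  qed
  then show ?thesis using Some t by (auto simp: GL_point_def dilation_entry mat_def)
qed

lemma (in delta_ring) delta_map_dilation_entry:
  fixes f :: "'r^'n::finite^'n \<Rightarrow> 'r^'n^'n" and i :: 'n
  assumes "delta_map_GL p \<phi> f"
  shows "delta_map_Gm p \<phi> (\<lambda>u. f (dilation i u) $ i $ i)"
proof -
  let ?h = "map_option (\<lambda>l. (l, i, i))"
  obtain m F where F: "rps p {v. case v of None \<Rightarrow> True | Some (l, _, _) \<Rightarrow> l \<le> m} (F i i)"
      "\<And>g. g \<in> GL_set \<Longrightarrow> rps_val p (F i i) (GL_point p \<phi> g) (f g $ i $ i)"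
    using assms unfolding delta_map_GL_def by blast
  have "inj ?h" by (rule option.inj_map) (simp add: inj_on_def)
  then interpret rps_freeze p \<phi> "{v. case v of None \<Rightarrow> True | Some (l, _, _) \<Rightarrow> l \<le> m}" "F i i" ?h
      "GL_point p \<phi> (mat 1)"
    using F(1) by unfold_locales
  have "?h -` {v. case v of None \<Rightarrow> True | Some (l, _, _) \<Rightarrow> l \<le> m}
      = {v. case v of None \<Rightarrow> True | Some l \<Rightarrow> l \<le> m}"
    by (auto split: option.splits)
  moreover have "rps_val p frozen_series (Gm_point p \<phi> u) (f (dilation i u) $ i $ i)" if "runit u" for u
    using rps_val_frozen_series[OF GL_point_dilation_other[where i = i] F(2)[OF dilation_GL[OF that]]]
    unfolding GL_point_dilation_diag .
  ultimately show ?thesis unfolding delta_map_Gm_def using rps_frozen_series by auto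
qed

section \<open>Cocycles on diagonal matrices and transvections\<close>

lemma transvection_conj_diag_mat:
  assumes "\<And>a. runit (x a)" "i \<noteq> j"
  shows "diag_mat x ** transvection i j c ** mat_inv (diag_mat x) = transvection i j (x i * c * ring_inv (x j))"
  using assms(2)
  by (simp add: vec_eq_iff mat_inv_diag_mat[OF assms(1)] diag_mat_mult_right diag_mat_mult_left)
     (auto simp: transvection_def runit_right_inverse[OF assms(1)])

lemma swap_mat_conj_dilation: "swap_mat i k ** dilation i s ** mat_inv (swap_mat i k) = dilation k s"
proof -
  let ?\<tau> = "Transposition.transpose i k"
  have "(swap_mat i k ** dilation i s ** swap_mat i k) $ a $ b = dilation i s $ ?\<tau> a $ ?\<tau> b" for a b
    by (simp add: swap_mat_mult_left swap_mat_mult_right)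
  moreover have "?\<tau> a = ?\<tau> b \<longleftrightarrow> a = b" "?\<tau> a = i \<longleftrightarrow> a = k" for a b
    by (auto simp: Transposition.transpose_def)
  ultimately show ?thesis by (simp add: vec_eq_iff mat_inv_swap_mat dilation_entry)
qed

lemma cocycle_diag_entry_mult:
  assumes "cocycle f" "\<And>l. runit (x l)" "\<And>l. runit (y l)"
  shows "f (diag_mat (\<lambda>l. x l * y l)) $ k $ k = f (diag_mat x) $ k $ k + f (diag_mat y) $ k $ k"
proof -
  have "f (diag_mat (\<lambda>l. x l * y l)) = f (diag_mat x) + Ad (diag_mat x) (f (diag_mat y))"
    using cocycleD[OF assms(1) diag_mat_GL diag_mat_GL] assms(2,3) by (simp add: diag_mat_mult)
  then have "f (diag_mat (\<lambda>l. x l * y l)) $ k $ k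
      = f (diag_mat x) $ k $ k + f (diag_mat y) $ k $ k * (x k * ring_inv (x k))"
    by (simp add: Ad_diag_mat[OF assms(2)] ac_simps)
  then show ?thesis using runit_right_inverse[OF assms(2)] by simp
qed

lemma cocycle_dilation_entry_mult:
  assumes "cocycle f" "runit u" "runit v"
  shows "f (dilation i (u * v)) $ i $ i = f (dilation i u) $ i $ i + f (dilation i v) $ i $ i"
proof -
  have "dilation i (u * v) = diag_mat (\<lambda>l. (if l = i then u else 1) * (if l = i then v else 1))"
    unfolding dilation_def by (rule arg_cong[where f = diag_mat]) auto
  then show ?thesis
    using cocycle_diag_entry_mult[OF assms(1), of "\<lambda>l. if l = i then u else 1" "\<lambda>l. if l = i then v else 1"] assms(2,3)
    unfolding dilation_def by simp
qed

lemma cocycle_on_elementary_products: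
  assumes cocycle: "cocycle G"
    and on_transvections: "\<And>i j c. i \<noteq> j \<Longrightarrow> G (transvection i j c) = 0"
    and on_diagonals: "\<And>x. (\<And>l. runit (x l)) \<Longrightarrow> G (diag_mat x) = mat (\<omega> (det (diag_mat x)))"
    and hom: "\<And>u v. runit u \<Longrightarrow> runit v \<Longrightarrow> \<omega> (u * v) = \<omega> u + \<omega> v"
  shows "g \<in> elementary_products \<Longrightarrow> G g = mat (\<omega> (det g))"
proof (induction rule: elementary_products.induct)
  case one
  have "\<omega> 1 = 0" using hom[OF runit_one runit_one] by (simp only: mult_1_left add_cancel_right_right)
  then show ?case using cocycle_one[OF cocycle] by simp
next
  case (transvection g i j c)
  have t: "transvection i j c \<in> GL_set" using transvection_GL[OF transvection.hyps(2)] .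
  have "G (transvection i j c ** g) = Ad (transvection i j c) (mat (\<omega> (det g)))"
    using cocycleD[OF cocycle t elementary_products_GL[OF transvection.hyps(1)]]
      on_transvections[OF transvection.hyps(2)] transvection.IH by simp
  then show ?case using transvection.hyps(2) by (simp add: Ad_mat[OF t] det_mul det_transvection)
next
  case (diagonal g x)
  have d: "diag_mat x \<in> GL_set" using diag_mat_GL[of x] diagonal.hyps(2) by blast
  have g: "g \<in> GL_set" using elementary_products_GL[OF diagonal.hyps(1)] .
  have "G (diag_mat x ** g) = mat (\<omega> (det (diag_mat x))) + Ad (diag_mat x) (mat (\<omega> (det g)))"
    using cocycleD[OF cocycle d g] on_diagonals[of x] diagonal.hyps(2) diagonal.IH by simp
  then show ?case
    using hom[OF GL_det_unit[OF d] GL_det_unit[OF g]] by (simp add: Ad_mat[OF d] det_mul mat_add)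
qed

locale diagonal_cocycle = delta_ring p \<phi> for p :: nat and \<phi> :: "'r::idom \<Rightarrow> 'r" +
  fixes F :: "'r^'n::finite^'n \<Rightarrow> 'r^'n^'n"
  assumes cocycle: "cocycle F"
    and diagonal: "\<And>x a b. (\<And>l. runit (x l)) \<Longrightarrow> a \<noteq> b \<Longrightarrow> F (diag_mat x) $ a $ b = 0"
begin

lemma transvection_conj:
  assumes ij: "i \<noteq> j" and x: "\<And>l. runit (x l)"
  shows "F (transvection i j (x i * a * ring_inv (x j))) $ u $ v
    = x u * F (transvection i j a) $ u $ v * ring_inv (x v)
      - (if u = i \<and> v = j then x i * a * ring_inv (x j) * (F (diag_mat x) $ j $ j - F (diag_mat x) $ i $ i) else 0)"
proof -
  let ?b = "x i * a * ring_inv (x j)"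
  have "F (transvection i j ?b) = F (diag_mat x) + Ad (diag_mat x) (F (transvection i j a))
      - Ad (transvection i j ?b) (F (diag_mat x))"
    using cocycle_conj[OF cocycle transvection_GL[OF ij] diag_mat_GL[OF x]]
    unfolding transvection_conj_diag_mat[OF x ij] .
  then show ?thesis
    using ij by (simp add: Ad_diag_mat[where x = x, OF x] Ad_transvection_diagonal diagonal[where x = x, OF x])
qed

lemma cocycle_transvection_add:
  assumes "i \<noteq> j"
  shows "F (transvection i j (a + b)) = F (transvection i j a) + Ad (transvection i j a) (F (transvection i j b))"
proof -
  have "F (transvection i j a ** transvection i j b) = F (transvection i j a) + Ad (transvection i j a) (F (transvection i j b))"
    by (rule cocycleD[OF cocycle transvection_GL[OF assms] transvection_GL[OF assms]])
  then show ?thesis by (simp add: transvection_add[OF assms])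
qed

lemma transvection_double:
  assumes "i \<noteq> j"
  shows "F (transvection i j (2 * a)) $ u $ v = 2 * F (transvection i j a) $ u $ v
    + (if u = i then a * F (transvection i j a) $ j $ v else 0)
    - (if v = j then (F (transvection i j a) $ u $ i + (if u = i then a * F (transvection i j a) $ j $ i else 0)) * a else 0)"
proof -
  have "F (transvection i j (2 * a)) = F (transvection i j a) + Ad (transvection i j a) (F (transvection i j a))"
    using cocycle_transvection_add[OF assms, of a a] by (simp only: mult_2)
  then show ?thesis using assms by (simp add: Ad_transvection)
qed

lemma transvection_entry_separated:
  fixes x :: "'n \<Rightarrow> 'r"
  assumes ij: "i \<noteq> j" and x: "\<And>l. runit (x l)" and "x i = x j" and uv: "\<not> (u = i \<and> v = j)"
    and "x u \<noteq> x v"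
  shows "F (transvection i j a) $ u $ v = 0"
proof -
  let ?X = "F (transvection i j a) $ u $ v"
  have "x i * a * ring_inv (x j) = a * (x j * ring_inv (x j))" using \<open>x i = x j\<close> by (simp add: ac_simps)
  then have arg: "x i * a * ring_inv (x j) = a" using runit_right_inverse[OF x] by simp
  have "?X = x u * ?X * ring_inv (x v)"
    using transvection_conj[where x = x, OF ij x, of a u v, unfolded arg]
    by (simp only: if_not_P[OF uv] diff_zero)
  then have "?X * x v = x u * ?X * ring_inv (x v) * x v" by (rule arg_cong[where f = "\<lambda>z. z * x v"])
  also have "\<dots> = x u * ?X * (ring_inv (x v) * x v)" by (simp only: mult.assoc)
  also have "\<dots> = x u * ?X" using runit_left_inverse[OF x] by simp
  finally have "(x v - x u) * ?X = 0" by (simp add: algebra_simps)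
  with \<open>x u \<noteq> x v\<close> show ?thesis by simp
qed

lemma transvection_conj_two:
  assumes ij: "i \<noteq> j" and uv: "\<not> (u = i \<and> v = j)"
  shows "F (transvection i j (2 * a)) $ u $ v
    = (if u = i then 2 else 1) * F (transvection i j a) $ u $ v * ring_inv (if v = i then 2 else 1)"
proof -
  have d: "\<And>l. runit (if l = i then 2 else 1 :: 'r)" using runit_two by simp
  show ?thesis
    using transvection_conj[where x = "\<lambda>l. if l = i then 2 else 1", OF ij d, of a u v] uv ij by simp
qed

text \<open>Comparing the cocycle identity for \<open>e\<^sub>i\<^sub>j(a) e\<^sub>i\<^sub>j(a) = e\<^sub>i\<^sub>j(2a)\<close> with conjugation by \<open>diag(2, 1, \<dots>, 1)\<close>,
  which also doubles the parameter, gives \<open>2X = X/2\<close> on the \<open>(j, i)\<close> entry and \<open>2X = X\<close> on the diagonal;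
  here \<open>3 \<noteq> 0\<close> and \<open>2 \<noteq> 1\<close> are needed.\<close>

lemma transvection_transposed_entry:
  assumes ij: "i \<noteq> j"
  shows "F (transvection i j a) $ j $ i = 0"
proof -
  let ?X = "F (transvection i j a) $ j $ i"
  have double: "2 * ?X = ?X * ring_inv 2"
    using transvection_double[OF ij, of a j i] transvection_conj_two[OF ij, of j i a] ij by simp
  have "4 * ?X = 2 * (2 * ?X)" by simp
  also have "\<dots> = ?X * (2 * ring_inv 2)" unfolding double by (simp only: ac_simps)
  also have "\<dots> = ?X" using runit_right_inverse[OF runit_two] by simp
  finally have four: "4 * ?X = ?X" .
  have "of_nat 3 * ?X = 4 * ?X - ?X" by (simp add: algebra_simps)
  also have "\<dots> = 0" unfolding four by simp
  finally show ?thesis using of_nat_neq_zero[of 3] by simp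
qed

lemma transvection_diagonal_entry:
  assumes ij: "i \<noteq> j"
  shows "F (transvection i j a) $ w $ w = 0"
proof -
  let ?X = "F (transvection i j a) $ w $ w"
  have "2 * ?X = (if w = i then 2 else 1) * ?X * ring_inv (if w = i then 2 else 1)"
    using transvection_double[OF ij, of a w w] transvection_conj_two[OF ij, of w w a] ij
      transvection_transposed_entry[OF ij, of a] by auto
  also have "\<dots> = ?X" using runit_right_inverse[OF runit_two] by (simp add: ac_simps)
  finally show ?thesis by simp
qed

lemma transvection_support:
  assumes ij: "i \<noteq> j" and uv: "\<not> (u = i \<and> v = j)"
  shows "F (transvection i j a) $ u $ v = 0"
proof (cases "u = v \<or> (u = j \<and> v = i)")
  case True
  then show ?thesis using transvection_diagonal_entry[OF ij] transvection_transposed_entry[OF ij] by auto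
next
  case False
  define x :: "'n \<Rightarrow> 'r" where
    "x l = (if u \<in> {i, j} \<or> v \<in> {i, j} then if l \<in> {i, j} then 2 else 1 else if l = u then 2 else 1)" for l
  have "\<And>l. runit (x l)" unfolding x_def using runit_two by simp
  moreover have "x i = x j" "x u \<noteq> x v" using False uv unfolding x_def by auto
  ultimately show ?thesis using transvection_entry_separated[where x = x, OF ij _ _ uv] by blast
qed

lemma transvection_entry_add:
  assumes "i \<noteq> j"
  shows "F (transvection i j (a + b)) $ i $ j = F (transvection i j a) $ i $ j + F (transvection i j b) $ i $ j"
  using cocycle_transvection_add[OF assms, of a b] assms
  by (simp add: Ad_transvection transvection_support)

lemma transvection_entry_scale:
  assumes ij: "i \<noteq> j" and "runit s"
  shows "F (transvection i j (s * a)) $ i $ j = s * F (transvection i j a) $ i $ j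
    - s * a * (F (dilation i s) $ j $ j - F (dilation i s) $ i $ i)"
proof -
  have x: "\<And>l. runit (if l = i then s else 1)" using \<open>runit s\<close> by simp
  show ?thesis
    using transvection_conj[where x = "\<lambda>l. if l = i then s else 1", OF ij x, of a i j] ij
    unfolding dilation_def by simp
qed

definition transvection_coeff :: "'n \<Rightarrow> 'n \<Rightarrow> 'r" where
  "transvection_coeff i j = F (transvection i j 1) $ i $ j"

text \<open>\<open>a \<mapsto> F(e\<^sub>i\<^sub>j(a))\<^sub>i\<^sub>j - a F(e\<^sub>i\<^sub>j(1))\<^sub>i\<^sub>j\<close> is additive and a derivation along units, hence zero.\<close>

lemma transvection_entry_linear:
  assumes ij: "i \<noteq> j"
  shows "F (transvection i j a) $ i $ j = a * transvection_coeff i j"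
proof -
  define D where "D a = F (transvection i j a) $ i $ j - a * transvection_coeff i j" for a
  have "derivation D"
  proof (rule derivation_from_units)
    show "D (a + b) = D a + D b" for a b
      unfolding D_def using transvection_entry_add[OF ij] by (simp add: algebra_simps)
    show "D (s * a) = s * D a + a * D s" if "runit s" for s a
    proof -
      let ?d = "F (dilation i s) $ j $ j - F (dilation i s) $ i $ i"
      have e1: "F (transvection i j (s * a)) $ i $ j = s * F (transvection i j a) $ i $ j - s * a * ?d"
        by (rule transvection_entry_scale[OF ij that])
      have e2: "F (transvection i j s) $ i $ j = s * transvection_coeff i j - s * ?d"
        using transvection_entry_scale[OF ij that, of 1] by (simp add: transvection_coeff_def)
      show ?thesis unfolding D_def e1 e2 by (simp add: algebra_simps)
    qed
  qed
  then have "D a = 0" by (rule derivation_vanishes)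
  then show ?thesis unfolding D_def by simp
qed

lemma transvection_value:
  assumes "i \<noteq> j"
  shows "F (transvection i j a) = (\<chi> u v. if u = i \<and> v = j then a * transvection_coeff i j else 0)"
  using transvection_entry_linear[OF assms] transvection_support[OF assms] by (simp add: vec_eq_iff)

lemma diag_entries_eq:
  assumes x: "\<And>l. runit (x l)"
  shows "F (diag_mat x) $ i $ i = F (diag_mat x) $ j $ j"
proof (cases "i = j")
  case False
  let ?b = "x i * 1 * ring_inv (x j)"
  have "?b * transvection_coeff i j
      = x i * transvection_coeff i j * ring_inv (x j) - ?b * (F (diag_mat x) $ j $ j - F (diag_mat x) $ i $ i)"
    using transvection_conj[where x = x, OF False x, of 1 i j] transvection_entry_linear[OF False, of ?b]
      transvection_entry_linear[OF False, of 1]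
    by simp
  then have "?b * (F (diag_mat x) $ j $ j - F (diag_mat x) $ i $ i) = 0" by (simp add: algebra_simps)
  moreover have "?b \<noteq> 0"
  proof -
    have "runit (x i * ring_inv (x j))" using runit_mult[OF x[of i] runit_ring_inv[OF x[of j]]] .
    then show ?thesis unfolding runit_def by auto
  qed
  ultimately show ?thesis by simp
qed simp

lemma diag_scalar:
  assumes "\<And>l. runit (x l)"
  shows "F (diag_mat x) = mat (F (diag_mat x) $ k $ k)"
  using diagonal[where x = x, OF assms] diag_entries_eq[where x = x, OF assms, of _ k]
  by (simp add: vec_eq_iff mat_def)

lemma dilation_entry_independent:
  assumes "runit s"
  shows "F (dilation k s) $ i $ i = F (dilation i s) $ i $ i"
proof -
  have d: "\<And>k. dilation k s \<in> GL_set" using dilation_GL[OF assms] .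
  have "F (dilation k s) = F (swap_mat i k) + Ad (swap_mat i k) (F (dilation i s))
      - Ad (dilation k s) (F (swap_mat i k))"
    using cocycle_conj[OF cocycle d[of i] swap_mat_GL[of i k]] unfolding swap_mat_conj_dilation .
  then have "F (dilation k s) $ k $ k = F (dilation i s) $ i $ i"
    using runit_right_inverse[OF assms]
    by (simp add: Ad_swap_mat Ad_diag_mat dilation_def assms ac_simps)
  moreover have "F (dilation k s) $ i $ i = F (dilation k s) $ k $ k"
    using diag_entries_eq[of "\<lambda>l. if l = k then s else 1"] assms unfolding dilation_def by simp
  ultimately show ?thesis by simp
qed

lemma diag_value:
  assumes x: "\<And>l. runit (x l)"
  shows "F (diag_mat x) = mat (F (dilation i (det (diag_mat x))) $ i $ i)"
proof -
  have "F (diag_mat (\<lambda>l. if l \<in> S then x l else 1)) $ i $ i = F (dilation i (\<Prod>l\<in>S. x l)) $ i $ i"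
    if "finite S" for S
  using that proof (induction S rule: finite_induct)
    case empty
    show ?case unfolding dilation_def by (simp add: if_distrib cong: if_cong)
  next
    case (insert k S)
    have units: "runit (\<Prod>l\<in>S. x l)" "\<And>l. runit (if l = k then x k else 1)"
      "\<And>l. runit (if l \<in> S then x l else 1)"
      using runit_prod[OF insert.hyps(1), of x] x by simp_all
    have "diag_mat (\<lambda>l. if l \<in> insert k S then x l else 1)
        = diag_mat (\<lambda>l. (if l = k then x k else 1) * (if l \<in> S then x l else 1))"
      using insert.hyps(2) by (intro arg_cong[where f = diag_mat]) auto
    then have "F (diag_mat (\<lambda>l. if l \<in> insert k S then x l else 1)) $ i $ i
        = F (dilation k (x k)) $ i $ i + F (dilation i (\<Prod>l\<in>S. x l)) $ i $ i"
      using cocycle_diag_entry_mult[where x = "\<lambda>l. if l = k then x k else 1" and y = "\<lambda>l. if l \<in> S then x l else 1",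
          OF cocycle units(2,3)] insert.IH
      unfolding dilation_def by simp
    also have "\<dots> = F (dilation i (x k * (\<Prod>l\<in>S. x l))) $ i $ i"
      using cocycle_dilation_entry_mult[OF cocycle x units(1)] dilation_entry_independent[OF x] by simp
    finally show ?case using insert.hyps by simp
  qed
  from this[of UNIV] show ?thesis using diag_scalar[where x = x, OF x, of i] by (simp add: det_diag_mat)
qed

lemma transvection_coeff_triangle:
  assumes "i \<noteq> j" "j \<noteq> k" "i \<noteq> k"
  shows "transvection_coeff j k = transvection_coeff i k - transvection_coeff i j"
proof -
  let ?e = "\<lambda>a b. transvection a b (1::'r)"
  have g: "?e i j \<in> GL_set" "?e j k \<in> GL_set" "?e i k \<in> GL_set"
    using assms transvection_GL by auto
  have "?e i j ** ?e j k = ?e j k ** (?e i j ** ?e i k)"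
    using assms by (simp add: vec_eq_iff transvection_mult_left) (auto simp: transvection_def)
  then have "F (?e i j) + Ad (?e i j) (F (?e j k)) = F (?e j k) + Ad (?e j k) (F (?e i j) + Ad (?e i j) (F (?e i k)))"
    using cocycleD[OF cocycle g(1,2)] cocycleD[OF cocycle g(2) GL_mult[OF g(1,3)]] cocycleD[OF cocycle g(1,3)]
    by simp
  from arg_cong[where f = "\<lambda>M. M $ i $ k", OF this] show ?thesis
    using assms by (simp add: Ad_transvection transvection_value algebra_simps)
qed

text \<open>The square of \<open>w = e\<^sub>i\<^sub>j(1) e\<^sub>j\<^sub>i(-1) e\<^sub>i\<^sub>j(1)\<close> is diagonal, so \<open>F(w\<^sup>2)\<^sub>i\<^sub>j = 0\<close>.\<close>

lemma transvection_coeff_antisym: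
  assumes ij: "i \<noteq> j"
  shows "transvection_coeff j i = - transvection_coeff i j"
proof -
  let ?e1 = "transvection i j (1::'r)" and ?e2 = "transvection j i (-1::'r)"
  let ?w = "?e1 ** ?e2 ** ?e1"
  have g: "?e1 \<in> GL_set" "?e2 \<in> GL_set" using transvection_GL[OF ij] transvection_GL[OF not_sym[OF ij]] .
  have gw: "?e1 ** ?e2 \<in> GL_set" "?w \<in> GL_set" using GL_mult g by blast+
  have "?w ** ?w = ?e1 ** (?e2 ** (?e1 ** (?e1 ** (?e2 ** ?e1))))" by (simp add: matrix_mul_assoc)
  also have "\<dots> = diag_mat (\<lambda>l. if l = i \<or> l = j then -1 else 1)"
    using ij by (simp add: vec_eq_iff transvection_mult_left) (auto simp: transvection_def diag_mat_def)
  finally have ww: "?w ** ?w = diag_mat (\<lambda>l. if l = i \<or> l = j then -1 else 1)" .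
  have Fw: "F ?w = F ?e1 + Ad ?e1 (F ?e2) + Ad ?e1 (Ad ?e2 (F ?e1))"
    using cocycleD[OF cocycle gw(1) g(1)] cocycleD[OF cocycle g] Ad_mult[OF g] by simp
  have "F (?w ** ?w) = F ?w + Ad ?e1 (Ad ?e2 (Ad ?e1 (F ?w)))"
    using cocycleD[OF cocycle gw(2) gw(2)] Ad_mult[OF gw(1) g(1)] Ad_mult[OF g] by simp
  moreover have "F (?w ** ?w) $ i $ j = 0" unfolding ww using ij by (intro diagonal) simp_all
  ultimately have "2 * (transvection_coeff i j + transvection_coeff j i) = 0"
    unfolding Fw using ij by (simp add: Ad_transvection transvection_value algebra_simps)
  moreover have "(2::'r) \<noteq> 0" using runit_two unfolding runit_def by auto
  ultimately have "transvection_coeff i j + transvection_coeff j i = 0" by (metis mult_eq_0_iff)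
  then have "transvection_coeff j i + transvection_coeff i j = 0" by (simp only: add.commute)
  then show ?thesis by (simp add: eq_neg_iff_add_eq_0)
qed

lemma transvection_coeff_potential: "\<exists>w. \<forall>i j. i \<noteq> j \<longrightarrow> transvection_coeff i j = w j - w i"
proof -
  fix i\<^sub>0 :: 'n
  define w where "w l = (if l = i\<^sub>0 then 0 else transvection_coeff i\<^sub>0 l)" for l
  have "transvection_coeff i j = w j - w i" if "i \<noteq> j" for i j
    using that transvection_coeff_triangle[of i\<^sub>0 i j] transvection_coeff_antisym[of i\<^sub>0 i]
    unfolding w_def by auto
  then show ?thesis by blast
qed

lemma decomposition: "\<exists>V. \<forall>g\<in>GL_set. F g = mat (F (dilation i (det g)) $ i $ i) + coboundary V g"
proof -
  obtain w where w: "\<And>i j. i \<noteq> j \<Longrightarrow> transvection_coeff i j = w j - w i"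
    using transvection_coeff_potential by blast
  define G where "G g = F g - coboundary (diag_mat w) g" for g
  have "G g = mat (F (dilation i (det g)) $ i $ i)" if "g \<in> elementary_products" for g
  proof (rule cocycle_on_elementary_products[OF _ _ _ _ that])
    show "cocycle G" unfolding G_def[abs_def] by (rule cocycle_diff_coboundary[OF cocycle])
    show "G (transvection a b c) = 0" if "a \<noteq> b" for a b c
    proof -
      have "F (transvection a b c) = (\<chi> u v. if u = a \<and> v = b then c * (w b - w a) else 0)"
        by (simp only: transvection_value[OF that] w[OF that])
      moreover have "coboundary (diag_mat w) (transvection a b c)
          = (\<chi> u v. if u = a \<and> v = b then c * (w b - w a) else 0)"
        by (simp add: vec_eq_iff coboundary_def Ad_transvection_diagonal[OF that] diag_mat_def)
      ultimately show ?thesis unfolding G_def by simp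
    qed
    show "G (diag_mat x) = mat (F (dilation i (det (diag_mat x))) $ i $ i)" if x: "\<And>l. runit (x l)" for x
    proof -
      have "coboundary (diag_mat w) (diag_mat x) = 0"
        unfolding coboundary_def using runit_right_inverse[OF x]
        by (simp add: vec_eq_iff Ad_diag_mat[where x = x, OF x]) (simp add: diag_mat_def ac_simps)
      then show ?thesis unfolding G_def using diag_value[where x = x, OF x] by simp
    qed
    show "F (dilation i (u * v)) $ i $ i = F (dilation i u) $ i $ i + F (dilation i v) $ i $ i"
      if "runit u" "runit v" for u v
      using cocycle_dilation_entry_mult[OF cocycle that] .
  qed
  then have "F g = mat (F (dilation i (det g)) $ i $ i) + coboundary (diag_mat w) g" if "g \<in> GL_set" for g
    using GL_subset_elementary_products that unfolding G_def by (auto simp: diff_eq_eq)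
  then show ?thesis by blast
qed

end

locale delta_cocycle = delta_ring p \<phi> for p :: nat and \<phi> :: "'r::idom \<Rightarrow> 'r" +
  fixes f :: "'r^'n::finite^'n \<Rightarrow> 'r^'n^'n"
  assumes cocycle: "cocycle f"
begin

text \<open>The reflections \<open>r\<^sub>a = diag(1, \<dots>, -1, \<dots>, 1)\<close> commute with all diagonal matrices, which
  pins down the off-diagonal part of \<open>f\<close> on diagonal matrices as a coboundary.\<close>

definition reflection_correction :: "'r^'n^'n" where
  "reflection_correction = (\<chi> a b. if a = b then 0 else - ring_inv 2 * f (dilation a (-1)) $ a $ b)"

lemma diag_mat_offdiag_eq_coboundary:
  assumes x: "\<And>l. runit (x l)" and ab: "a \<noteq> b"
  shows "f (diag_mat x) $ a $ b = coboundary reflection_correction (diag_mat x) $ a $ b"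
proof -
  let ?r = "dilation a (-1::'r)"
  have r: "?r \<in> GL_set" by (rule dilation_GL) simp
  have d: "diag_mat x \<in> GL_set" by (rule diag_mat_GL[of x, OF x])
  have "diag_mat x ** ?r = ?r ** diag_mat x" unfolding dilation_def diag_mat_mult by (simp add: mult.commute)
  then have "f (diag_mat x) + Ad (diag_mat x) (f ?r) = f ?r + Ad ?r (f (diag_mat x))"
    by (rule cocycle_commute[OF cocycle d r])
  from arg_cong[where f = "\<lambda>M. M $ a $ b", OF this]
  have "f (diag_mat x) $ a $ b + x a * f ?r $ a $ b * ring_inv (x b) = f ?r $ a $ b - f (diag_mat x) $ a $ b"
    using ab unfolding dilation_def
    by (simp add: Ad_diag_mat[where x = x, OF x] Ad_diag_mat[where x = "\<lambda>l. if l = a then -1 else 1"])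
  then have double: "2 * f (diag_mat x) $ a $ b = f ?r $ a $ b - x a * f ?r $ a $ b * ring_inv (x b)"
    by (simp add: algebra_simps)
  have "coboundary reflection_correction (diag_mat x) $ a $ b
      = ring_inv 2 * (f ?r $ a $ b - x a * f ?r $ a $ b * ring_inv (x b))"
    using ab by (simp add: coboundary_def Ad_diag_mat[where x = x, OF x] reflection_correction_def algebra_simps)
  also have "\<dots> = (ring_inv 2 * 2) * f (diag_mat x) $ a $ b" unfolding double[symmetric] by (simp only: mult.assoc)
  also have "\<dots> = f (diag_mat x) $ a $ b" using runit_left_inverse[OF runit_two] by simp
  finally show ?thesis by simp
qed

lemma diagonal_cocycle_corrected: "diagonal_cocycle p \<phi> (\<lambda>g. f g - coboundary reflection_correction g)"
proof unfold_locales
  show "cocycle (\<lambda>g. f g - coboundary reflection_correction g)" by (rule cocycle_diff_coboundary[OF cocycle])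
  show "(f (diag_mat x) - coboundary reflection_correction (diag_mat x)) $ a $ b = 0"
    if "\<And>l. runit (x l)" "a \<noteq> b" for x a b
    using diag_mat_offdiag_eq_coboundary[OF that] by simp
qed

lemma cocycle_decomposition: "\<exists>V. \<forall>g\<in>GL_set. f g = mat (f (dilation i (det g)) $ i $ i) + coboundary V g"
proof -
  interpret corrected: diagonal_cocycle p \<phi> "\<lambda>g. f g - coboundary reflection_correction g"
    by (rule diagonal_cocycle_corrected)
  obtain V where V: "\<And>g. g \<in> GL_set \<Longrightarrow> f g - coboundary reflection_correction g
      = mat ((f (dilation i (det g)) - coboundary reflection_correction (dilation i (det g))) $ i $ i) + coboundary V g"
    using corrected.decomposition[of i] by blast
  have "f g = mat (f (dilation i (det g)) $ i $ i) + coboundary (V + reflection_correction) g" if g: "g \<in> GL_set" for g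
  proof -
    have "coboundary reflection_correction (dilation i (det g)) $ i $ i = 0"
      unfolding dilation_def using GL_det_unit[OF g] by (intro coboundary_diag_mat_diag_entry) simp
    then show ?thesis using V[OF g] by (simp add: coboundary_add algebra_simps)
  qed
  then show ?thesis by blast
qed

end

theorem theorem1p3:
  fixes p :: nat and \<phi> :: "'r::idom \<Rightarrow> 'r" and f :: "'r^'n^'n \<Rightarrow> 'r^'n^'n"
  assumes "delta_setting p \<phi>"
    and "delta_map_GL p \<phi> f"
    and "\<forall>g1\<in>GL_set. \<forall>g2\<in>GL_set. f (g1 ** g2) = f g1 + g1 ** f g2 ** mat_inv g1"
  shows "\<exists>(\<omega>::'r \<Rightarrow> 'r) (v::'r^'n^'n). delta_hom_Gm_Ga p \<phi> \<omega> \<and>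
           (\<forall>g\<in>GL_set. f g = mat (\<omega> (det g)) + g ** v ** mat_inv g - v)"
proof -
  have "cocycle f" using assms(3) unfolding cocycle_def Ad_def by blast
  with assms(1) interpret delta_cocycle p \<phi> f by unfold_locales
  let ?i = "undefined :: 'n"
  let ?\<omega> = "\<lambda>u. f (dilation ?i u) $ ?i $ ?i"
  obtain V where V: "\<forall>g\<in>GL_set. f g = mat (?\<omega> (det g)) + coboundary V g"
    using cocycle_decomposition by blast
  have "delta_hom_Gm_Ga p \<phi> ?\<omega>"
    unfolding delta_hom_Gm_Ga_def
    using cocycle_dilation_entry_mult[OF cocycle] delta_map_dilation_entry[OF assms(2)] by blast
  moreover have "\<forall>g\<in>GL_set. f g = mat (?\<omega> (det g)) + g ** V ** mat_inv g - V"
    using V unfolding coboundary_def Ad_def by (simp add: algebra_simps)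
  ultimately show ?thesis by blast
qed

end
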